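(* Let $X$ be an FK-space containing $\phi$ such that $D_p^qB\supseteq\overline{\phi}$ (closure of $\phi$ in $X$). Then $\overline{\phi}$ has $\sigma_p^q[K]$, i.e. $\overline{\phi}\subseteq D_p^qS$, and $D_p^qS=D_p^qW=\overline{\phi}$.
   Context: An FK-space is a vector subspace of the space $w$ of all complex sequences with a complete metrizable locally convex topology in which coordinate functionals are continuous; $X'$ is its continuous dual. $\delta^j$ has $1$ in position $j$, $0$ elsewhere; $\phi=\operatorname{span}\{\delta^j\}$. $p(n)<q(n)$ are nonnegative integer sequences with $q(n)\to\infty$. For $x\in w$, $x^{(k)}=\sum_{j=1}^kx_j\delta^j$ and $T_n(x)=\frac{1}{q(n)-p(n)}\sum_{k=p(n)+1}^{q(n)}x^{(k)}$. Subspaces of $X$: $D_p^qS=\{x\in X: T_n(x)\to x\text{ in }X\}$; $D_p^qW=\{x\in X: f(T_n(x))\to f(x)\ \forall f\in X'\}$; $D_p^qB=\{x\in X:\sup_n|f(T_n(x))|<\infty\ \forall f\in X'\}$. A subset $Y\subseteq X$ has $\sigma_p^q[K]$ if $T_n(x)\to x$ in $X$ for every $x\in Y$. *)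

theory Defs
  imports "HOL-Analysis.Analysis"
begin

text \<open>Sequences are indexed from 0: the space w is nat => complex.
  An FK-space is given by a complex linear subspace X of w together with a countable
  family of seminorms P k on X (a Frechet, i.e. complete metrizable locally convex,
  topology) in which all coordinate functionals are continuous.\<close>

definition fk_topology :: "(nat \<Rightarrow> complex) set \<Rightarrow> (nat \<Rightarrow> (nat \<Rightarrow> complex) \<Rightarrow> real)
    \<Rightarrow> (nat \<Rightarrow> complex) topology" where
  "fk_topology X P = topology (\<lambda>U. U \<subseteq> X \<and> (\<forall>x\<in>U. \<exists>k \<epsilon>. \<epsilon> > 0 \<and>
      {y\<in>X. (\<Sum>i\<le>k. P i (\<lambda>j. y j - x j)) < \<epsilon>} \<subseteq> U))"

definition FK_space :: "(nat \<Rightarrow> complex) set \<Rightarrow> (nat \<Rightarrow> (nat \<Rightarrow> complex) \<Rightarrow> real) \<Rightarrow> bool" where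
  "FK_space X P \<longleftrightarrow>
     \<comment> \<open>X is a complex linear subspace of w\<close>
     (\<lambda>j. 0) \<in> X \<and> (\<forall>x\<in>X. \<forall>y\<in>X. (\<lambda>j. x j + y j) \<in> X) \<and> (\<forall>c. \<forall>x\<in>X. (\<lambda>j. c * x j) \<in> X) \<and>
     \<comment> \<open>each P k is a seminorm on X\<close>
     (\<forall>k. \<forall>x\<in>X. P k x \<ge> 0) \<and>
     (\<forall>k. \<forall>x\<in>X. \<forall>y\<in>X. P k (\<lambda>j. x j + y j) \<le> P k x + P k y) \<and>
     (\<forall>k c. \<forall>x\<in>X. P k (\<lambda>j. c * x j) = cmod c * P k x) \<and>
     \<comment> \<open>the family separates points (Hausdorff, hence metrizable)\<close>
     (\<forall>x\<in>X. (\<forall>k. P k x = 0) \<longrightarrow> x = (\<lambda>j. 0)) \<and>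
     \<comment> \<open>completeness\<close>
     (\<forall>s. (\<forall>n. s n \<in> X) \<and> (\<forall>k. \<forall>\<epsilon>>0. \<exists>N. \<forall>m\<ge>N. \<forall>n\<ge>N. P k (\<lambda>j. s m j - s n j) < \<epsilon>)
          \<longrightarrow> (\<exists>x\<in>X. limitin (fk_topology X P) s x sequentially)) \<and>
     \<comment> \<open>coordinate functionals are continuous\<close>
     (\<forall>j. continuous_map (fk_topology X P) euclidean (\<lambda>x. x j))"

definition fk_dual :: "(nat \<Rightarrow> complex) set \<Rightarrow> (nat \<Rightarrow> (nat \<Rightarrow> complex) \<Rightarrow> real)
    \<Rightarrow> ((nat \<Rightarrow> complex) \<Rightarrow> complex) set" where
  "fk_dual X P = {f. (\<forall>x\<in>X. \<forall>y\<in>X. f (\<lambda>j. x j + y j) = f x + f y) \<and>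
                     (\<forall>c. \<forall>x\<in>X. f (\<lambda>j. c * x j) = c * f x) \<and>
                     continuous_map (fk_topology X P) euclidean f}"

text \<open>phi = span of the unit sequences = finitely supported sequences.\<close>
definition phi :: "(nat \<Rightarrow> complex) set" where
  "phi = {x. finite {j. x j \<noteq> 0}}"

text \<open>Section x^(k): the first k coordinates (0-based: indices j < k).\<close>
definition section_seq :: "(nat \<Rightarrow> complex) \<Rightarrow> nat \<Rightarrow> (nat \<Rightarrow> complex)" where
  "section_seq x k = (\<lambda>j. if j < k then x j else 0)"

definition Tmean :: "(nat \<Rightarrow> nat) \<Rightarrow> (nat \<Rightarrow> nat) \<Rightarrow> nat \<Rightarrow> (nat \<Rightarrow> complex) \<Rightarrow> (nat \<Rightarrow> complex)" where
  "Tmean p q n x = (\<lambda>j. (\<Sum>k\<in>{p n<..q n}. section_seq x k j) / of_nat (q n - p n))"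

definition DS :: "(nat \<Rightarrow> complex) set \<Rightarrow> (nat \<Rightarrow> (nat \<Rightarrow> complex) \<Rightarrow> real)
    \<Rightarrow> (nat \<Rightarrow> nat) \<Rightarrow> (nat \<Rightarrow> nat) \<Rightarrow> (nat \<Rightarrow> complex) set" where
  "DS X P p q = {x\<in>X. limitin (fk_topology X P) (\<lambda>n. Tmean p q n x) x sequentially}"

definition DW :: "(nat \<Rightarrow> complex) set \<Rightarrow> (nat \<Rightarrow> (nat \<Rightarrow> complex) \<Rightarrow> real)
    \<Rightarrow> (nat \<Rightarrow> nat) \<Rightarrow> (nat \<Rightarrow> nat) \<Rightarrow> (nat \<Rightarrow> complex) set" where
  "DW X P p q = {x\<in>X. \<forall>f\<in>fk_dual X P. (\<lambda>n. f (Tmean p q n x)) \<longlonglongrightarrow> f x}"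

definition DB :: "(nat \<Rightarrow> complex) set \<Rightarrow> (nat \<Rightarrow> (nat \<Rightarrow> complex) \<Rightarrow> real)
    \<Rightarrow> (nat \<Rightarrow> nat) \<Rightarrow> (nat \<Rightarrow> nat) \<Rightarrow> (nat \<Rightarrow> complex) set" where
  "DB X P p q = {x\<in>X. \<forall>f\<in>fk_dual X P. bounded (range (\<lambda>n. f (Tmean p q n x)))}"

definition has_sigma :: "(nat \<Rightarrow> complex) set \<Rightarrow> (nat \<Rightarrow> (nat \<Rightarrow> complex) \<Rightarrow> real)
    \<Rightarrow> (nat \<Rightarrow> nat) \<Rightarrow> (nat \<Rightarrow> nat) \<Rightarrow> (nat \<Rightarrow> complex) set \<Rightarrow> bool" where
  "has_sigma X P p q Y \<longleftrightarrow> (\<forall>x\<in>Y. limitin (fk_topology X P) (\<lambda>n. Tmean p q n x) x sequentially)"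

end

theory Submission
  imports Defs "HOL-Library.Function_Algebras"
begin

instantiation "fun" :: (type, real_vector) real_vector
begin

definition scaleR_fun :: "real \<Rightarrow> ('a \<Rightarrow> 'b) \<Rightarrow> 'a \<Rightarrow> 'b" where
  "scaleR_fun r f = (\<lambda>x. r *\<^sub>R f x)"

instance
  by standard (simp_all add: scaleR_fun_def plus_fun_def fun_eq_iff scaleR_add_right scaleR_add_left)

end

definition dominated_linear_graph :: "('a::real_vector \<Rightarrow> real) \<Rightarrow> ('a \<times> real) set \<Rightarrow> bool" where
  "dominated_linear_graph p G \<longleftrightarrow> single_valued G \<and>
     (\<forall>x a y b. (x, a) \<in> G \<longrightarrow> (y, b) \<in> G \<longrightarrow> (x + y, a + b) \<in> G) \<and>
     (\<forall>x a r. (x, a) \<in> G \<longrightarrow> (r *\<^sub>R x, r * a) \<in> G) \<and>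
     (\<forall>x a. (x, a) \<in> G \<longrightarrow> a \<le> p x)"

lemma dominated_linear_graphD:
  assumes "dominated_linear_graph p G"
  shows dominated_linear_graph_unique: "(x, a) \<in> G \<Longrightarrow> (x, b) \<in> G \<Longrightarrow> a = b"
    and dominated_linear_graph_add: "(x, a) \<in> G \<Longrightarrow> (y, b) \<in> G \<Longrightarrow> (x + y, a + b) \<in> G"
    and dominated_linear_graph_scale: "(x, a) \<in> G \<Longrightarrow> (r *\<^sub>R x, r * a) \<in> G"
    and dominated_linear_graph_le: "(x, a) \<in> G \<Longrightarrow> a \<le> p x"
  using assms unfolding dominated_linear_graph_def single_valued_def by blast+

lemma dominated_linear_graph_Union:
  assumes "C \<noteq> {}" and "\<And>G. G \<in> C \<Longrightarrow> dominated_linear_graph p G"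
    and "\<And>G H. G \<in> C \<Longrightarrow> H \<in> C \<Longrightarrow> G \<subseteq> H \<or> H \<subseteq> G"
  shows "dominated_linear_graph p (\<Union>C)"
proof -
  have common: "\<exists>G\<in>C. u \<in> G \<and> v \<in> G" if "u \<in> \<Union>C" "v \<in> \<Union>C" for u v
    using assms(3) that by blast
  show ?thesis
    unfolding dominated_linear_graph_def single_valued_def
  proof (intro conjI allI impI)
    fix x a b assume "(x, a) \<in> \<Union>C" "(x, b) \<in> \<Union>C"
    then show "a = b"
      using common assms(2) dominated_linear_graph_unique by metis
  next
    fix x a y b assume "(x, a) \<in> \<Union>C" "(y, b) \<in> \<Union>C"
    then show "(x + y, a + b) \<in> \<Union>C"
      using common assms(2) dominated_linear_graph_add by (metis UnionI)
  qed (use assms(2) dominated_linear_graph_scale dominated_linear_graph_le in blast)+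
qed

lemma dominated_linear_graph_adjoin:
  fixes p :: "'a::real_vector \<Rightarrow> real"
  assumes G: "dominated_linear_graph p G" and x0: "x0 \<notin> Domain G"
    and "subspace X" "Domain G \<subseteq> X" "x0 \<in> X"
    and p_pos: "\<And>r x. r > 0 \<Longrightarrow> x \<in> X \<Longrightarrow> p (r *\<^sub>R x) = r * p x"
    and lo: "\<And>y a. (y, a) \<in> G \<Longrightarrow> a - p (y - x0) \<le> c"
    and hi: "\<And>y a. (y, a) \<in> G \<Longrightarrow> c \<le> p (y + x0) - a"
  shows "dominated_linear_graph p {(y + t *\<^sub>R x0, a + t * c) | y a t. (y, a) \<in> G}"
    (is "dominated_linear_graph p ?G'")
proof -
  note G_def = G[unfolded dominated_linear_graph_def single_valued_def]
  have inX: "y \<in> X" if "(y, a) \<in> G" for y a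
    using that \<open>Domain G \<subseteq> X\<close> by blast
  have unique: "t1 = t2 \<and> a1 = a2"
    if "(y1, a1) \<in> G" "(y2, a2) \<in> G" "y1 + t1 *\<^sub>R x0 = y2 + t2 *\<^sub>R x0" for y1 a1 y2 a2 t1 t2
  proof -
    have "t1 = t2"
    proof (rule ccontr)
      assume "t1 \<noteq> t2"
      have "((1 / (t1 - t2)) *\<^sub>R (y2 + (-1) *\<^sub>R y1), (1 / (t1 - t2)) * (a2 + (-1) * a1)) \<in> G"
        using that(1,2) G_def by blast
      moreover have "y2 + (-1) *\<^sub>R y1 = (t1 - t2) *\<^sub>R x0"
        using that(3) by (simp add: scaleR_left_diff_distrib algebra_simps)
      then have "(1 / (t1 - t2)) *\<^sub>R (y2 + (-1) *\<^sub>R y1) = x0"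
        using \<open>t1 \<noteq> t2\<close> by simp
      ultimately show False using x0 by (metis Domain.DomainI)
    qed
    then show ?thesis using that G_def by auto
  qed
  have bound: "a + t * c \<le> p (y + t *\<^sub>R x0)" if ya: "(y, a) \<in> G" for y a t
  proof (cases t "0::real" rule: linorder_cases)
    case less
    define s where "s = - t"
    have s: "s > 0" using less by (simp add: s_def)
    have "(1 / s) * a - p ((1 / s) *\<^sub>R y - x0) \<le> c"
      using lo[of "(1 / s) *\<^sub>R y" "(1 / s) * a"] ya G_def by blast
    then have "a - s * p ((1 / s) *\<^sub>R y - x0) \<le> s * c"
      using s by (simp add: field_simps)
    moreover have "s * p ((1 / s) *\<^sub>R y - x0) = p (y + t *\<^sub>R x0)"
    proof -
      have "(1 / s) *\<^sub>R y - x0 \<in> X"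
        using inX[OF ya] assms(3,5) by (simp add: subspace_diff subspace_scale)
      then have "s * p ((1 / s) *\<^sub>R y - x0) = p (s *\<^sub>R ((1 / s) *\<^sub>R y - x0))"
        using p_pos[OF s] by simp
      also have "s *\<^sub>R ((1 / s) *\<^sub>R y - x0) = y + t *\<^sub>R x0"
        using s by (simp add: s_def scaleR_diff_right)
      finally show ?thesis .
    qed
    ultimately show ?thesis by (simp add: s_def)
  next
    case equal
    then show ?thesis using ya G_def by simp
  next
    case greater
    have "c \<le> p ((1 / t) *\<^sub>R y + x0) - (1 / t) * a"
      using hi[of "(1 / t) *\<^sub>R y" "(1 / t) * a"] ya G_def by blast
    then have "t * c \<le> t * p ((1 / t) *\<^sub>R y + x0) - a"
      using greater by (simp add: field_simps)
    moreover have "t * p ((1 / t) *\<^sub>R y + x0) = p (y + t *\<^sub>R x0)"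
    proof -
      have "(1 / t) *\<^sub>R y + x0 \<in> X"
        using inX[OF ya] assms(3,5) by (simp add: subspace_add subspace_scale)
      then have "t * p ((1 / t) *\<^sub>R y + x0) = p (t *\<^sub>R ((1 / t) *\<^sub>R y + x0))"
        using p_pos[OF greater] by simp
      also have "t *\<^sub>R ((1 / t) *\<^sub>R y + x0) = y + t *\<^sub>R x0"
        using greater by (simp add: scaleR_add_right)
      finally show ?thesis .
    qed
    ultimately show ?thesis by simp
  qed
  have mem: "(y + t *\<^sub>R x0, a + t * c) \<in> ?G'" if "(y, a) \<in> G" for y a t
    using that by blast
  show ?thesis
    unfolding dominated_linear_graph_def single_valued_def
  proof (intro conjI allI impI)
    fix x a b assume "(x, a) \<in> ?G'" "(x, b) \<in> ?G'"
    then show "a = b" using unique by blast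
  next
    fix x a y b assume "(x, a) \<in> ?G'" "(y, b) \<in> ?G'"
    then obtain x1 a1 t1 y1 b1 t2 where "(x1, a1) \<in> G" "(y1, b1) \<in> G"
      and "x = x1 + t1 *\<^sub>R x0" "a = a1 + t1 * c" "y = y1 + t2 *\<^sub>R x0" "b = b1 + t2 * c"
      by blast
    moreover have "(x1 + y1, a1 + b1) \<in> G" using calculation(1,2) G_def by blast
    ultimately show "(x + y, a + b) \<in> ?G'"
      using mem[of "x1 + y1" "a1 + b1" "t1 + t2"] by (simp add: algebra_simps)
  next
    fix x a r assume "(x, a) \<in> ?G'"
    then obtain x1 a1 t where "(x1, a1) \<in> G" "x = x1 + t *\<^sub>R x0" "a = a1 + t * c"
      by blast
    moreover have "(r *\<^sub>R x1, r * a1) \<in> G" using calculation(1) G_def by blast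
    ultimately show "(r *\<^sub>R x, r * a) \<in> ?G'"
      using mem[of "r *\<^sub>R x1" "r * a1" "r * t"] by (simp add: algebra_simps)
  next
    fix x a assume "(x, a) \<in> ?G'"
    then show "a \<le> p x" using bound by blast
  qed
qed

lemma dominated_linear_graph_extend:
  fixes p :: "'a::real_vector \<Rightarrow> real"
  assumes G: "dominated_linear_graph p G" "G \<noteq> {}" "Domain G \<subseteq> X"
    and X: "subspace X" and x0: "x0 \<in> X" "x0 \<notin> Domain G"
    and p_add: "\<And>x y. x \<in> X \<Longrightarrow> y \<in> X \<Longrightarrow> p (x + y) \<le> p x + p y"
    and p_pos: "\<And>r x. r > 0 \<Longrightarrow> x \<in> X \<Longrightarrow> p (r *\<^sub>R x) = r * p x"
  obtains G' where "dominated_linear_graph p G'" "G \<subseteq> G'" "x0 \<in> Domain G'" "Domain G' \<subseteq> X"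
proof -
  have inX: "y \<in> X" if "(y, a) \<in> G" for y a
    using that G(3) by blast
  have zero: "(0, 0) \<in> G"
  proof -
    obtain y a where "(y, a) \<in> G" using G(2) by auto
    then have "(0 *\<^sub>R y, 0 * a) \<in> G" by (rule dominated_linear_graph_scale[OF G(1)])
    then show ?thesis by simp
  qed
  have key: "a - p (y - x0) \<le> p (z + x0) - b" if "(y, a) \<in> G" "(z, b) \<in> G" for y a z b
  proof -
    have "a + b \<le> p (y + z)"
      by (rule dominated_linear_graph_le[OF G(1) dominated_linear_graph_add[OF G(1) that]])
    also have "\<dots> \<le> p (y - x0) + p (z + x0)"
      using p_add[of "y - x0" "z + x0"] inX[OF that(1)] inX[OF that(2)] x0(1) X
      by (simp add: subspace_diff subspace_add)
    finally show ?thesis by simp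
  qed
  define L where "L = {a - p (y - x0) | y a. (y, a) \<in> G}"
  have "bdd_above L"
    unfolding L_def using key[OF _ zero] by (intro bdd_aboveI) blast
  define c where "c = Sup L"
  have lo: "a - p (y - x0) \<le> c" if "(y, a) \<in> G" for y a
    unfolding c_def by (rule cSup_upper[OF _ \<open>bdd_above L\<close>]) (use that L_def in blast)
  have hi: "c \<le> p (z + x0) - b" if "(z, b) \<in> G" for z b
    unfolding c_def by (rule cSup_least) (use that key zero L_def in blast)+
  define G' where "G' = {(y + t *\<^sub>R x0, a + t * c) | y a t. (y, a) \<in> G}"
  have mem: "(y + t *\<^sub>R x0, a + t * c) \<in> G'" if "(y, a) \<in> G" for y a t
    unfolding G'_def using that by blast
  show thesis
  proof
    show "dominated_linear_graph p G'"
      unfolding G'_def by (rule dominated_linear_graph_adjoin[OF G(1) x0(2) X G(3) x0(1) p_pos lo hi])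
    show "G \<subseteq> G'"
      using mem[of _ _ 0] by auto
    have "(0 + 1 *\<^sub>R x0, 0 + 1 * c) \<in> G'"
      using mem[OF zero] .
    then show "x0 \<in> Domain G'" by auto
    show "Domain G' \<subseteq> X"
      unfolding G'_def using inX x0(1) X by (blast intro: subspace_add subspace_scale)
  qed
qed

theorem Hahn_Banach_real:
  fixes p g :: "'a::real_vector \<Rightarrow> real"
  assumes X: "subspace X" and M: "subspace M" "M \<subseteq> X"
    and p_add: "\<And>x y. x \<in> X \<Longrightarrow> y \<in> X \<Longrightarrow> p (x + y) \<le> p x + p y"
    and p_pos: "\<And>r x. r > 0 \<Longrightarrow> x \<in> X \<Longrightarrow> p (r *\<^sub>R x) = r * p x"
    and g_add: "\<And>x y. x \<in> M \<Longrightarrow> y \<in> M \<Longrightarrow> g (x + y) = g x + g y"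
    and g_scale: "\<And>r x. x \<in> M \<Longrightarrow> g (r *\<^sub>R x) = r * g x"
    and g_le: "\<And>x. x \<in> M \<Longrightarrow> g x \<le> p x"
  obtains G where "\<And>x y. x \<in> X \<Longrightarrow> y \<in> X \<Longrightarrow> G (x + y) = G x + G y"
    and "\<And>r x. x \<in> X \<Longrightarrow> G (r *\<^sub>R x) = r * G x"
    and "\<And>x. x \<in> M \<Longrightarrow> G x = g x" and "\<And>x. x \<in> X \<Longrightarrow> G x \<le> p x"
proof -
  define graph_g where "graph_g = {(x, g x) | x. x \<in> M}"
  define \<A> where "\<A> = {G. dominated_linear_graph p G \<and> graph_g \<subseteq> G \<and> Domain G \<subseteq> X}"
  have "dominated_linear_graph p graph_g"
    unfolding graph_g_def dominated_linear_graph_def single_valued_def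
    using M(1) g_add g_scale g_le by (auto intro: subspace_add subspace_scale)
  moreover have "Domain graph_g \<subseteq> X"
    unfolding graph_g_def using M(2) by blast
  ultimately have graph_g: "graph_g \<in> \<A>"
    unfolding \<A>_def by blast
  have "\<exists>G\<in>\<A>. \<forall>G'\<in>\<A>. G \<subseteq> G' \<longrightarrow> G' = G"
  proof (rule subset_Zorn_nonempty)
    fix C assume C: "C \<noteq> {}" "subset.chain \<A> C"
    then have "C \<subseteq> \<A>" and comparable: "\<And>G H. G \<in> C \<Longrightarrow> H \<in> C \<Longrightarrow> G \<subseteq> H \<or> H \<subseteq> G"
      unfolding subset.chain_def by auto
    then have "dominated_linear_graph p (\<Union>C)"
      using dominated_linear_graph_Union[OF C(1)] unfolding \<A>_def by blast
    moreover have "graph_g \<subseteq> \<Union>C" "Domain (\<Union>C) \<subseteq> X"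
      using C(1) \<open>C \<subseteq> \<A>\<close> unfolding \<A>_def by blast+
    ultimately show "\<Union>C \<in> \<A>"
      unfolding \<A>_def by blast
  qed (use graph_g in blast)
  then obtain G where "G \<in> \<A>" and max: "\<And>G'. G' \<in> \<A> \<Longrightarrow> G \<subseteq> G' \<Longrightarrow> G' = G"
    by blast
  then have G: "dominated_linear_graph p G" "graph_g \<subseteq> G" "Domain G \<subseteq> X"
    unfolding \<A>_def by auto
  have "(0, g 0) \<in> G"
    using G(2) subspace_0[OF M(1)] unfolding graph_g_def by blast
  then have "G \<noteq> {}" by blast
  have total: "x \<in> Domain G" if x: "x \<in> X" for x
  proof (rule ccontr)
    assume "x \<notin> Domain G"
    then obtain G' where "dominated_linear_graph p G'" "G \<subseteq> G'" "x \<in> Domain G'"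
      "Domain G' \<subseteq> X"
      using dominated_linear_graph_extend[OF G(1) \<open>G \<noteq> {}\<close> G(3) X x _ p_add p_pos] by blast
    moreover have "G' \<in> \<A>"
      using calculation G(2) unfolding \<A>_def by blast
    ultimately show False
      using max[of G'] \<open>x \<notin> Domain G\<close> by blast
  qed
  define F where "F x = (THE a. (x, a) \<in> G)" for x
  have F: "F x = a" if xa: "(x, a) \<in> G" for x a
    unfolding F_def
    by (rule the_equality) (use xa dominated_linear_graph_unique[OF G(1) _ xa] in blast)+
  have FG: "(x, F x) \<in> G" if x: "x \<in> X" for x
    using total[OF x] F by blast
  show thesis
  proof
    show "F (x + y) = F x + F y" if "x \<in> X" "y \<in> X" for x y
      using F dominated_linear_graph_add[OF G(1) FG FG] that by blast
    show "F (r *\<^sub>R x) = r * F x" if "x \<in> X" for r x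
      using F dominated_linear_graph_scale[OF G(1) FG] that by blast
    show "F x = g x" if "x \<in> M" for x
      using F G(2) that unfolding graph_g_def by blast
    show "F x \<le> p x" if "x \<in> X" for x
      using dominated_linear_graph_le[OF G(1) FG] that by blast
  qed
qed

definition cscale :: "complex \<Rightarrow> (nat \<Rightarrow> complex) \<Rightarrow> nat \<Rightarrow> complex"  (infixr "*\<^sub>C" 75)
  where "c *\<^sub>C x = (\<lambda>j. c * x j)"

lemma cscale_apply [simp]: "(c *\<^sub>C x) j = c * x j"
  by (simp add: cscale_def)

lemma scaleR_seq: "r *\<^sub>R x = complex_of_real r *\<^sub>C x"
  for x :: "nat \<Rightarrow> complex"
  by (simp add: fun_eq_iff scaleR_conv_of_real scaleR_fun_def)

lemma cscale_add_right: "c *\<^sub>C (x + y) = c *\<^sub>C x + c *\<^sub>C y"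
  by (simp add: fun_eq_iff distrib_left)

lemma cscale_cscale: "a *\<^sub>C (b *\<^sub>C x) = (a * b) *\<^sub>C x"
  by (simp add: fun_eq_iff)

lemma cscale_zero_left [simp]: "0 *\<^sub>C x = 0"
  by (simp add: fun_eq_iff)

lemma cscale_zero_right [simp]: "c *\<^sub>C 0 = 0"
  by (simp add: fun_eq_iff)

lemma cscale_one [simp]: "1 *\<^sub>C x = x"
  by (simp add: fun_eq_iff)

lemma cscale_minus_one [simp]: "(-1) *\<^sub>C x = - x"
  by (simp add: fun_eq_iff)

definition csubspace :: "(nat \<Rightarrow> complex) set \<Rightarrow> bool" where
  "csubspace S \<longleftrightarrow> 0 \<in> S \<and> (\<forall>x\<in>S. \<forall>y\<in>S. x + y \<in> S) \<and> (\<forall>c. \<forall>x\<in>S. c *\<^sub>C x \<in> S)"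

definition clinear_on :: "(nat \<Rightarrow> complex) set \<Rightarrow> ((nat \<Rightarrow> complex) \<Rightarrow> complex) \<Rightarrow> bool" where
  "clinear_on S f \<longleftrightarrow>
     (\<forall>x\<in>S. \<forall>y\<in>S. f (x + y) = f x + f y) \<and> (\<forall>c. \<forall>x\<in>S. f (c *\<^sub>C x) = c * f x)"

definition seminorm_on :: "(nat \<Rightarrow> complex) set \<Rightarrow> ((nat \<Rightarrow> complex) \<Rightarrow> real) \<Rightarrow> bool" where
  "seminorm_on S p \<longleftrightarrow>
     (\<forall>x\<in>S. \<forall>y\<in>S. p (x + y) \<le> p x + p y) \<and> (\<forall>c. \<forall>x\<in>S. p (c *\<^sub>C x) = cmod c * p x)"

lemma csubspaceD:
  assumes "csubspace S"
  shows csubspace_0: "0 \<in> S"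
    and csubspace_add: "x \<in> S \<Longrightarrow> y \<in> S \<Longrightarrow> x + y \<in> S"
    and csubspace_scale: "x \<in> S \<Longrightarrow> c *\<^sub>C x \<in> S"
  using assms unfolding csubspace_def by blast+

lemma csubspace_minus: "csubspace S \<Longrightarrow> x \<in> S \<Longrightarrow> - x \<in> S"
  using csubspace_scale[of S x "-1"] by (simp add: cscale_minus_one)

lemma csubspace_diff: "csubspace S \<Longrightarrow> x \<in> S \<Longrightarrow> y \<in> S \<Longrightarrow> x - y \<in> S"
  using csubspace_add[OF _ _ csubspace_minus] by (metis diff_conv_add_uminus)

lemma csubspace_sum: "csubspace S \<Longrightarrow> (\<And>i. i \<in> A \<Longrightarrow> f i \<in> S) \<Longrightarrow> (\<Sum>i\<in>A. f i) \<in> S"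
  by (induction A rule: infinite_finite_induct) (auto intro: csubspace_0 csubspace_add)

lemma csubspace_imp_subspace: "csubspace S \<Longrightarrow> subspace S"
  unfolding subspace_def scaleR_seq by (blast intro: csubspace_0 csubspace_add csubspace_scale)

lemma clinear_onD:
  assumes "clinear_on S f"
  shows clinear_on_add: "x \<in> S \<Longrightarrow> y \<in> S \<Longrightarrow> f (x + y) = f x + f y"
    and clinear_on_scale: "x \<in> S \<Longrightarrow> f (c *\<^sub>C x) = c * f x"
  using assms unfolding clinear_on_def by blast+

lemma clinear_on_diff:
  assumes "csubspace S" "clinear_on S f" "x \<in> S" "y \<in> S"
  shows "f (x - y) = f x - f y"
  using clinear_on_add[OF assms(2,3) csubspace_scale[OF assms(1,4)], of "-1"]
    clinear_on_scale[OF assms(2,4), of "-1"]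
  by (simp add: cscale_minus_one)

lemma seminorm_onD:
  assumes "seminorm_on S p"
  shows seminorm_on_add: "x \<in> S \<Longrightarrow> y \<in> S \<Longrightarrow> p (x + y) \<le> p x + p y"
    and seminorm_on_scale: "x \<in> S \<Longrightarrow> p (c *\<^sub>C x) = cmod c * p x"
  using assms unfolding seminorm_on_def by blast+

lemma seminorm_on_divide: "e > 0 \<Longrightarrow> seminorm_on S p \<Longrightarrow> seminorm_on S (\<lambda>x. p x / e)"
  unfolding seminorm_on_def by (simp add: add_divide_distrib[symmetric] divide_right_mono)

context
  fixes S p
  assumes S: "csubspace S" and p: "seminorm_on S p"
begin

lemma seminorm_on_minus: "x \<in> S \<Longrightarrow> p (- x) = p x"
  using seminorm_on_scale[OF p, of x "-1"] by (simp add: cscale_minus_one)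

lemma seminorm_on_diff_commute: "x \<in> S \<Longrightarrow> y \<in> S \<Longrightarrow> p (x - y) = p (y - x)"
  using seminorm_on_minus[of "y - x"] csubspace_diff[OF S] by simp

lemma seminorm_on_triangle:
  "x \<in> S \<Longrightarrow> y \<in> S \<Longrightarrow> z \<in> S \<Longrightarrow> p (x - z) \<le> p (x - y) + p (y - z)"
  using seminorm_on_add[OF p, of "x - y" "y - z"] csubspace_diff[OF S] by simp

lemma seminorm_on_0: "p 0 = 0"
proof -
  have "(0::complex) *\<^sub>C 0 = 0" by (simp add: fun_eq_iff)
  then show ?thesis using seminorm_on_scale[OF p csubspace_0[OF S], of 0] by simp
qed

lemma seminorm_on_nonneg: "x \<in> S \<Longrightarrow> p x \<ge> 0"
  using seminorm_on_triangle[of x 0 x] seminorm_on_minus[of x] csubspace_0[OF S] seminorm_on_0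
  by simp

lemma seminorm_on_reverse_triangle: "x \<in> S \<Longrightarrow> y \<in> S \<Longrightarrow> \<bar>p x - p y\<bar> \<le> p (x - y)"
  using seminorm_on_triangle[of x y 0] seminorm_on_triangle[of y x 0]
    seminorm_on_diff_commute[of x y] csubspace_0[OF S]
  by (simp add: abs_le_iff)

text \<open>The trick behind both gliding hump arguments below.\<close>
lemma seminorm_on_plus_minus: "x \<in> S \<Longrightarrow> y \<in> S \<Longrightarrow> 2 * p y \<le> p (x + y) + p (x - y)"
proof -
  assume xy: "x \<in> S" "y \<in> S"
  have "(x + y) - (x - y) = 2 *\<^sub>C y" by (simp add: fun_eq_iff)
  then show ?thesis
    using seminorm_on_triangle[of "x + y" x "x - y"] seminorm_on_scale[OF p xy(2), of 2]
      seminorm_on_triangle[of "x + y" 0 "x - y"] seminorm_on_minus[of "x - y"] seminorm_on_0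
      csubspace_add[OF S xy] csubspace_diff[OF S xy] csubspace_0[OF S]
    by simp
qed

lemma seminorm_on_sum:
  "finite A \<Longrightarrow> (\<And>i. i \<in> A \<Longrightarrow> f i \<in> S) \<Longrightarrow> p (\<Sum>i\<in>A. f i) \<le> (\<Sum>i\<in>A. p (f i))"
proof (induction A rule: finite_induct)
  case empty
  then show ?case by (simp only: sum.empty seminorm_on_0 order_refl)
next
  case (insert a A)
  have "(\<Sum>i\<in>A. f i) \<in> S"
    using insert.prems by (intro csubspace_sum[OF S]) auto
  then have "p (f a + (\<Sum>i\<in>A. f i)) \<le> p (f a) + (\<Sum>i\<in>A. p (f i))"
    using insert seminorm_on_add[OF p, of "f a" "\<Sum>i\<in>A. f i"] by simp
  then show ?case
    by (simp only: sum.insert[OF insert.hyps])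
qed

end

theorem Hahn_Banach_complex:
  assumes X: "csubspace X" and M: "csubspace M" "M \<subseteq> X" and p: "seminorm_on X p"
    and g: "clinear_on M g" and g_le: "\<And>x. x \<in> M \<Longrightarrow> cmod (g x) \<le> p x"
  obtains F where "clinear_on X F" and "\<And>x. x \<in> M \<Longrightarrow> F x = g x"
    and "\<And>x. x \<in> X \<Longrightarrow> cmod (F x) \<le> p x"
proof -
  have p_pos: "p (r *\<^sub>R x) = r * p x" if "r > 0" "x \<in> X" for r x
    using seminorm_on_scale[OF p that(2)] that(1) by (simp add: scaleR_seq)
  have Re_g_add: "Re (g (x + y)) = Re (g x) + Re (g y)" if "x \<in> M" "y \<in> M" for x y
    using clinear_on_add[OF g that] by simp
  have Re_g_scale: "Re (g (r *\<^sub>R x)) = r * Re (g x)" if "x \<in> M" for r x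
    using clinear_on_scale[OF g that] by (simp add: scaleR_seq)
  have Re_g_le: "Re (g x) \<le> p x" if "x \<in> M" for x
    using g_le[OF that] complex_Re_le_cmod[of "g x"] by linarith
  obtain U where U_add: "\<And>x y. x \<in> X \<Longrightarrow> y \<in> X \<Longrightarrow> U (x + y) = U x + U y"
    and U_scale: "\<And>r x. x \<in> X \<Longrightarrow> U (r *\<^sub>R x) = r * U x"
    and U_M: "\<And>x. x \<in> M \<Longrightarrow> U x = Re (g x)" and U_le: "\<And>x. x \<in> X \<Longrightarrow> U x \<le> p x"
    using Hahn_Banach_real[where g="\<lambda>x. Re (g x)", OF csubspace_imp_subspace[OF X] csubspace_imp_subspace[OF M(1)] M(2)
          seminorm_on_add[OF p] p_pos Re_g_add Re_g_scale Re_g_le] by blast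
  have i_X: "\<i> *\<^sub>C x \<in> X" if "x \<in> X" for x
    using csubspace_scale[OF X that] .
  have U_cscale: "U (c *\<^sub>C x) = Re c * U x + Im c * U (\<i> *\<^sub>C x)" if x: "x \<in> X" for c x
  proof -
    have "c *\<^sub>C x = Re c *\<^sub>R x + Im c *\<^sub>R (\<i> *\<^sub>C x)"
      by (simp add: scaleR_seq fun_eq_iff complex_eq_iff)
    moreover have "Re c *\<^sub>R x \<in> X" "Im c *\<^sub>R (\<i> *\<^sub>C x) \<in> X"
      using csubspace_scale[OF X] x i_X[OF x] by (simp_all add: scaleR_seq)
    ultimately show ?thesis
      using U_add U_scale[OF x] U_scale[OF i_X[OF x]] by metis
  qed
  define F where "F x = Complex (U x) (- U (\<i> *\<^sub>C x))" for x
  have F: "clinear_on X F"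
    unfolding clinear_on_def
  proof (intro conjI ballI allI)
    fix x y assume "x \<in> X" "y \<in> X"
    then show "F (x + y) = F x + F y"
      using U_add[of x y] U_add[of "\<i> *\<^sub>C x" "\<i> *\<^sub>C y"] i_X
      by (simp add: F_def cscale_add_right complex_eq_iff)
  next
    fix c x assume x: "x \<in> X"
    have "U (\<i> *\<^sub>C (c *\<^sub>C x)) = - Im c * U x + Re c * U (\<i> *\<^sub>C x)"
      using U_cscale[OF x, of "\<i> * c"] by (simp add: cscale_cscale)
    then show "F (c *\<^sub>C x) = c * F x"
      using U_cscale[OF x, of c] by (simp add: F_def complex_eq_iff algebra_simps)
  qed
  show thesis
  proof
    show "clinear_on X F" by (rule F)
    show "F x = g x" if x: "x \<in> M" for x
      using U_M[OF x] U_M[OF csubspace_scale[OF M(1) x, of \<i>]] clinear_on_scale[OF g x, of \<i>]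
      by (simp add: F_def complex_eq_iff)
    show "cmod (F x) \<le> p x" if x: "x \<in> X" for x
    proof -
      define w where "w = (if F x = 0 then 1 else cnj (F x) / cmod (F x))"
      have w: "cmod w = 1" "w * F x = cmod (F x)"
        by (simp_all add: w_def norm_divide complex_norm_square[symmetric] power2_eq_square
            field_simps)
      have "cmod (F x) = Re (F (w *\<^sub>C x))"
        using clinear_on_scale[OF F x, of w] w(2) by simp
      also have "\<dots> = U (w *\<^sub>C x)"
        by (simp add: F_def)
      also have "\<dots> \<le> p (w *\<^sub>C x)" by (rule U_le[OF csubspace_scale[OF X x]])
      also have "\<dots> = p x" using seminorm_on_scale[OF p x, of w] w(1) by simp
      finally show ?thesis .
    qed
  qed
qed

locale fk_space =
  fixes X :: "(nat \<Rightarrow> complex) set" and P :: "nat \<Rightarrow> (nat \<Rightarrow> complex) \<Rightarrow> real"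
  assumes FK_space: "FK_space X P"
begin

abbreviation \<tau> :: "(nat \<Rightarrow> complex) topology" where
  "\<tau> \<equiv> fk_topology X P"

definition Q :: "nat \<Rightarrow> (nat \<Rightarrow> complex) \<Rightarrow> real" where
  "Q k x = (\<Sum>i\<le>k. P i x)"

lemma csubspace: "csubspace X"
  using FK_space unfolding FK_space_def csubspace_def cscale_def by (simp add: plus_fun_def zero_fun_def)

lemma seminorm_on_P: "seminorm_on X (P k)"
  using FK_space unfolding FK_space_def seminorm_on_def cscale_def by (simp add: plus_fun_def)

lemma seminorm_on_Q: "seminorm_on X (Q k)"
  unfolding seminorm_on_def Q_def
  using seminorm_on_add[OF seminorm_on_P] seminorm_on_scale[OF seminorm_on_P]
  by (auto simp: sum_distrib_left sum.distrib[symmetric] intro: sum_mono)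

lemmas Q_nonneg = seminorm_on_nonneg[OF csubspace seminorm_on_Q]
  and Q_0 = seminorm_on_0[OF csubspace seminorm_on_Q]
  and Q_add = seminorm_on_add[OF seminorm_on_Q]
  and Q_scale = seminorm_on_scale[OF seminorm_on_Q]
  and Q_minus = seminorm_on_minus[OF csubspace seminorm_on_Q]
  and Q_diff_commute = seminorm_on_diff_commute[OF csubspace seminorm_on_Q]
  and Q_triangle = seminorm_on_triangle[OF csubspace seminorm_on_Q]
  and Q_reverse_triangle = seminorm_on_reverse_triangle[OF csubspace seminorm_on_Q]
  and Q_plus_minus = seminorm_on_plus_minus[OF csubspace seminorm_on_Q]
  and Q_sum = seminorm_on_sum[OF csubspace seminorm_on_Q]

lemmas X_0 = csubspace_0[OF csubspace]
  and X_add = csubspace_add[OF csubspace]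
  and X_scale = csubspace_scale[OF csubspace]
  and X_minus = csubspace_minus[OF csubspace]
  and X_diff = csubspace_diff[OF csubspace]

lemma P_le_Q: "x \<in> X \<Longrightarrow> i \<le> k \<Longrightarrow> P i x \<le> Q k x"
  unfolding Q_def
  by (rule member_le_sum) (auto intro: seminorm_on_nonneg[OF csubspace seminorm_on_P])

lemma Q_mono: "x \<in> X \<Longrightarrow> k \<le> k' \<Longrightarrow> Q k x \<le> Q k' x"
  unfolding Q_def
  by (rule sum_mono2) (auto intro: seminorm_on_nonneg[OF csubspace seminorm_on_P])

lemma fk_topology_eq:
  "\<tau> = topology (\<lambda>U. U \<subseteq> X \<and> (\<forall>x\<in>U. \<exists>k e. e > 0 \<and> {y\<in>X. Q k (y - x) < e} \<subseteq> U))"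
  unfolding fk_topology_def Q_def by (simp add: fun_diff_def)

lemma istopology_Q_balls:
  "istopology (\<lambda>U. U \<subseteq> X \<and> (\<forall>x\<in>U. \<exists>k e. e > 0 \<and> {y\<in>X. Q k (y - x) < e} \<subseteq> U))"
  unfolding istopology_def
proof (rule conjI; intro allI impI)
  fix S U
  assume S: "S \<subseteq> X \<and> (\<forall>x\<in>S. \<exists>k e. e > 0 \<and> {y\<in>X. Q k (y - x) < e} \<subseteq> S)"
    and U: "U \<subseteq> X \<and> (\<forall>x\<in>U. \<exists>k e. e > 0 \<and> {y\<in>X. Q k (y - x) < e} \<subseteq> U)"
  show "S \<inter> U \<subseteq> X \<and> (\<forall>x\<in>S \<inter> U. \<exists>k e. e > 0 \<and> {y\<in>X. Q k (y - x) < e} \<subseteq> S \<inter> U)"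
  proof (intro conjI ballI)
    fix x assume x: "x \<in> S \<inter> U"
    obtain k1 e1 where 1: "e1 > 0" "{y\<in>X. Q k1 (y - x) < e1} \<subseteq> S" using S x by blast
    obtain k2 e2 where 2: "e2 > 0" "{y\<in>X. Q k2 (y - x) < e2} \<subseteq> U" using U x by blast
    have "{y\<in>X. Q (max k1 k2) (y - x) < min e1 e2} \<subseteq> S \<inter> U"
    proof
      fix y assume y: "y \<in> {y\<in>X. Q (max k1 k2) (y - x) < min e1 e2}"
      have "y - x \<in> X" using x y S X_diff by blast
      then have "Q k1 (y - x) < e1" "Q k2 (y - x) < e2"
        using y Q_mono[of "y - x" k1 "max k1 k2"] Q_mono[of "y - x" k2 "max k1 k2"] by auto
      then show "y \<in> S \<inter> U" using y 1 2 by blast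
    qed
    then show "\<exists>k e. e > 0 \<and> {y\<in>X. Q k (y - x) < e} \<subseteq> S \<inter> U"
      using 1 2 by (intro exI[of _ "max k1 k2"] exI[of _ "min e1 e2"]) auto
  qed (use S in blast)
next
  fix \<K> assume K: "\<forall>K\<in>\<K>. K \<subseteq> X \<and> (\<forall>x\<in>K. \<exists>k e. e > 0 \<and> {y\<in>X. Q k (y - x) < e} \<subseteq> K)"
  show "\<Union>\<K> \<subseteq> X \<and> (\<forall>x\<in>\<Union>\<K>. \<exists>k e. e > 0 \<and> {y\<in>X. Q k (y - x) < e} \<subseteq> \<Union>\<K>)"
  proof (intro conjI ballI)
    fix x assume "x \<in> \<Union>\<K>"
    then obtain K where "K \<in> \<K>" "x \<in> K" by blast
    then obtain k e where "e > 0" "{y\<in>X. Q k (y - x) < e} \<subseteq> K" using K by blast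
    then show "\<exists>k e. e > 0 \<and> {y\<in>X. Q k (y - x) < e} \<subseteq> \<Union>\<K>" using \<open>K \<in> \<K>\<close> by blast
  qed (use K in blast)
qed

lemma openin_fk_topology:
  "openin \<tau> U \<longleftrightarrow> U \<subseteq> X \<and> (\<forall>x\<in>U. \<exists>k e. e > 0 \<and> {y\<in>X. Q k (y - x) < e} \<subseteq> U)"
  by (simp add: fk_topology_eq istopology_Q_balls)

lemma openin_Q_ball: "x \<in> X \<Longrightarrow> openin \<tau> {y\<in>X. Q k (y - x) < e}"
  unfolding openin_fk_topology
proof (intro conjI ballI)
  fix z assume x: "x \<in> X" and z: "z \<in> {y\<in>X. Q k (y - x) < e}"
  have "{y\<in>X. Q k (y - z) < e - Q k (z - x)} \<subseteq> {y\<in>X. Q k (y - x) < e}"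
    using Q_triangle[of _ z x k] x z by fastforce
  then show "\<exists>k' e'. e' > 0 \<and> {y\<in>X. Q k' (y - z) < e'} \<subseteq> {y\<in>X. Q k (y - x) < e}"
    using z by (intro exI[of _ k] exI[of _ "e - Q k (z - x)"]) auto
qed auto

lemma topspace_fk_topology: "topspace \<tau> = X"
proof -
  have "openin \<tau> X"
    unfolding openin_fk_topology by (auto intro: exI[of _ "1::real"])
  then show ?thesis
    using openin_subset[of \<tau> X] openin_fk_topology[of "topspace \<tau>"] by auto
qed

lemma limitin_fk_topology:
  assumes "\<And>n. s n \<in> X"
  shows "limitin \<tau> s x sequentially \<longleftrightarrow> x \<in> X \<and> (\<forall>k. (\<lambda>n. Q k (s n - x)) \<longlonglongrightarrow> 0)"
proof -
  have tendsto_iff: "(\<lambda>n. Q k (s n - x)) \<longlonglongrightarrow> 0 \<longleftrightarrow>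
      (\<forall>e>0. eventually (\<lambda>n. s n \<in> {y\<in>X. Q k (y - x) < e}) sequentially)" if "x \<in> X" for k
  proof -
    have "\<bar>Q k (s n - x)\<bar> = Q k (s n - x)" for n
      using Q_nonneg[OF X_diff[OF assms that]] by simp
    then show ?thesis
      unfolding tendsto_iff dist_real_def using assms by simp
  qed
  show ?thesis
  proof
    assume L: "limitin \<tau> s x sequentially"
    then have x: "x \<in> X"
      using limitin_topspace[OF L] topspace_fk_topology by simp
    have "eventually (\<lambda>n. s n \<in> {y\<in>X. Q k (y - x) < e}) sequentially" if "e > 0" for k e
      by (rule limitinD[OF L openin_Q_ball[OF x]]) (use x that Q_0 in simp)
    then show "x \<in> X \<and> (\<forall>k. (\<lambda>n. Q k (s n - x)) \<longlonglongrightarrow> 0)"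
      using tendsto_iff x by blast
  next
    assume R: "x \<in> X \<and> (\<forall>k. (\<lambda>n. Q k (s n - x)) \<longlonglongrightarrow> 0)"
    show "limitin \<tau> s x sequentially"
      unfolding limitin_def topspace_fk_topology
    proof (intro conjI allI impI)
      fix U assume "openin \<tau> U \<and> x \<in> U"
      then obtain k e where "e > 0" and ball: "{y\<in>X. Q k (y - x) < e} \<subseteq> U"
        unfolding openin_fk_topology by blast
      then have "eventually (\<lambda>n. s n \<in> {y\<in>X. Q k (y - x) < e}) sequentially"
        using R tendsto_iff[of k] by blast
      then show "eventually (\<lambda>n. s n \<in> U) sequentially"
        by (rule eventually_mono) (use ball in blast)
    qed (use R in blast)
  qed
qed

lemma in_closure_of_fk_topology:
  assumes "S \<subseteq> X"
  shows "x \<in> \<tau> closure_of S \<longleftrightarrow> x \<in> X \<and> (\<forall>k e. e > 0 \<longrightarrow> (\<exists>y\<in>S. Q k (y - x) < e))"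
proof
  assume "x \<in> \<tau> closure_of S"
  then have x: "x \<in> X" and meets: "\<And>T. x \<in> T \<Longrightarrow> openin \<tau> T \<Longrightarrow> \<exists>y. y \<in> S \<and> y \<in> T"
    unfolding in_closure_of topspace_fk_topology by auto
  have "\<exists>y\<in>S. Q k (y - x) < e" if "e > 0" for k e
    using meets[OF _ openin_Q_ball[OF x, of k e]] x that Q_0 by auto
  with x show "x \<in> X \<and> (\<forall>k e. e > 0 \<longrightarrow> (\<exists>y\<in>S. Q k (y - x) < e))" by blast
next
  assume R: "x \<in> X \<and> (\<forall>k e. e > 0 \<longrightarrow> (\<exists>y\<in>S. Q k (y - x) < e))"
  show "x \<in> \<tau> closure_of S"
    unfolding in_closure_of topspace_fk_topology
  proof (intro conjI allI impI)
    fix T assume "x \<in> T \<and> openin \<tau> T"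
    then obtain k e where "e > 0" and ball: "{y\<in>X. Q k (y - x) < e} \<subseteq> T"
      unfolding openin_fk_topology by blast
    then obtain y where "y \<in> S" "Q k (y - x) < e"
      using R by blast
    then show "\<exists>y. y \<in> S \<and> y \<in> T" using assms ball by blast
  qed (use R in blast)
qed

lemma fk_complete:
  assumes "\<And>n. s n \<in> X"
    and "\<And>k e. e > 0 \<Longrightarrow> \<exists>N. \<forall>m\<ge>N. \<forall>n\<ge>N. Q k (s m - s n) < e"
  obtains x where "x \<in> X" "limitin \<tau> s x sequentially"
proof -
  have "\<exists>N. \<forall>m\<ge>N. \<forall>n\<ge>N. P k (\<lambda>j. s m j - s n j) < e" if e: "e > 0" for k e
  proof -
    obtain N where N: "\<And>m n. m \<ge> N \<Longrightarrow> n \<ge> N \<Longrightarrow> Q k (s m - s n) < e"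
      using assms(2)[OF e] by blast
    have "P k (\<lambda>j. s m j - s n j) < e" if "m \<ge> N" "n \<ge> N" for m n
      using N[OF that] P_le_Q[OF X_diff[OF assms(1) assms(1)] order_refl, of k m n]
      by (simp add: fun_diff_def)
    then show ?thesis by blast
  qed
  moreover have "(\<forall>n. s n \<in> X) \<and> (\<forall>k e. 0 < e \<longrightarrow> (\<exists>N. \<forall>m\<ge>N. \<forall>n\<ge>N. P k (\<lambda>j. s m j - s n j) < e))
      \<longrightarrow> (\<exists>x\<in>X. limitin \<tau> s x sequentially)"
    using FK_space unfolding FK_space_def by (elim conjE allE)
  ultimately show thesis
    using assms(1) that by blast
qed

lemma fk_dual_iff: "f \<in> fk_dual X P \<longleftrightarrow> clinear_on X f \<and> continuous_map \<tau> euclidean f"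
  by (simp add: fk_dual_def clinear_on_def cscale_def plus_fun_def)

lemma coordinate_continuous: "continuous_map \<tau> euclidean (\<lambda>x. x j)"
  using FK_space unfolding FK_space_def by blast

end

lemma csubspace_line: "csubspace (range (\<lambda>c. c *\<^sub>C b))"
  unfolding csubspace_def
proof (intro conjI ballI allI)
  show "0 \<in> range (\<lambda>c. c *\<^sub>C b)"
    by (rule range_eqI[where x=0]) (simp add: fun_eq_iff)
  fix x y assume "x \<in> range (\<lambda>c. c *\<^sub>C b)" "y \<in> range (\<lambda>c. c *\<^sub>C b)"
  then obtain a a' where "x = a *\<^sub>C b" "y = a' *\<^sub>C b" by blast
  then show "x + y \<in> range (\<lambda>c. c *\<^sub>C b)"
    by (intro range_eqI[where x="a + a'"]) (simp add: fun_eq_iff distrib_right)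
next
  fix c x assume "x \<in> range (\<lambda>c. c *\<^sub>C b)"
  then obtain a where "x = a *\<^sub>C b" by blast
  then show "c *\<^sub>C x \<in> range (\<lambda>c. c *\<^sub>C b)"
    by (intro range_eqI[where x="c * a"]) (simp add: fun_eq_iff)
qed

lemma csubspace_adjoin:
  assumes "csubspace M"
  shows "csubspace {m + c *\<^sub>C x0 | m c. m \<in> M}"
  unfolding csubspace_def
proof (intro conjI ballI allI)
  show "0 \<in> {m + c *\<^sub>C x0 | m c. m \<in> M}"
    using csubspace_0[OF assms] by (intro CollectI exI[of _ 0] exI[of _ 0]) (simp add: fun_eq_iff)
next
  fix x y assume "x \<in> {m + c *\<^sub>C x0 | m c. m \<in> M}" "y \<in> {m + c *\<^sub>C x0 | m c. m \<in> M}"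
  then obtain m c m' c' where "m \<in> M" "m' \<in> M" "x = m + c *\<^sub>C x0" "y = m' + c' *\<^sub>C x0"
    by blast
  moreover have "m + c *\<^sub>C x0 + (m' + c' *\<^sub>C x0) = (m + m') + (c + c') *\<^sub>C x0"
    by (simp add: fun_eq_iff algebra_simps)
  ultimately show "x + y \<in> {m + c *\<^sub>C x0 | m c. m \<in> M}"
    using csubspace_add[OF assms] by blast
next
  fix d x assume "x \<in> {m + c *\<^sub>C x0 | m c. m \<in> M}"
  then obtain m c where "m \<in> M" "x = m + c *\<^sub>C x0"
    by blast
  moreover have "d *\<^sub>C (m + c *\<^sub>C x0) = d *\<^sub>C m + (d * c) *\<^sub>C x0"
    by (simp add: fun_eq_iff algebra_simps)
  ultimately show "d *\<^sub>C x \<in> {m + c *\<^sub>C x0 | m c. m \<in> M}"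
    using csubspace_scale[OF assms] by blast
qed

lemma adjoin_coefficient_unique:
  assumes "csubspace M" "x0 \<notin> M" "m \<in> M" "m' \<in> M" "m + c *\<^sub>C x0 = m' + c' *\<^sub>C x0"
  shows "c = c'"
proof (rule ccontr)
  assume "c \<noteq> c'"
  have "(1 / (c - c')) *\<^sub>C (m' - m) \<in> M"
    using assms(1,3,4) by (intro csubspace_scale csubspace_diff)
  moreover have "(1 / (c - c')) *\<^sub>C (m' - m) = x0"
  proof
    fix j
    have "(c - c') * x0 j = m' j - m j"
      using fun_cong[OF assms(5), of j] by (simp add: algebra_simps)
    then show "((1 / (c - c')) *\<^sub>C (m' - m)) j = x0 j"
      using \<open>c \<noteq> c'\<close> by (simp add: field_simps)
  qed
  ultimately show False using assms(2) by simp
qed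

context fk_space
begin

definition dominated :: "(nat \<Rightarrow> complex) set \<Rightarrow> ((nat \<Rightarrow> complex) \<Rightarrow> real) set \<Rightarrow> bool" where
  "dominated Y \<Phi> \<longleftrightarrow> (\<exists>k C. C \<ge> 0 \<and> (\<forall>\<phi>\<in>\<Phi>. \<forall>y\<in>Y. \<phi> y \<le> C * Q k y))"

lemma dominatedI:
  "C \<ge> 0 \<Longrightarrow> (\<And>\<phi> y. \<phi> \<in> \<Phi> \<Longrightarrow> y \<in> Y \<Longrightarrow> \<phi> y \<le> C * Q k y) \<Longrightarrow> dominated Y \<Phi>"
  unfolding dominated_def by blast

lemma dominatedE:
  assumes "dominated Y \<Phi>"
  obtains C k where "C \<ge> 0" "\<forall>\<phi>\<in>\<Phi>. \<forall>y\<in>Y. \<phi> y \<le> C * Q k y"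
  using assms unfolding dominated_def by blast

lemma dominated_Un:
  assumes "Y \<subseteq> X" "dominated Y \<Phi>" "dominated Y \<Psi>"
  shows "dominated Y (\<Phi> \<union> \<Psi>)"
proof -
  obtain C k where C: "C \<ge> 0" "\<forall>\<phi>\<in>\<Phi>. \<forall>y\<in>Y. \<phi> y \<le> C * Q k y"
    using assms(2) by (rule dominatedE)
  obtain C' k' where C': "C' \<ge> 0" "\<forall>\<phi>\<in>\<Psi>. \<forall>y\<in>Y. \<phi> y \<le> C' * Q k' y"
    using assms(3) by (rule dominatedE)
  have "C * Q k y \<le> max C C' * Q (max k k') y" "C' * Q k' y \<le> max C C' * Q (max k k') y"
    if "y \<in> Y" for y
    using that assms(1) C(1) C'(1) Q_nonneg Q_mono[of y]
    by (auto intro!: mult_mono)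
  note bounds = this
  show ?thesis
  proof (rule dominatedI[where C="max C C'" and k="max k k'"])
    fix \<phi> y assume "\<phi> \<in> \<Phi> \<union> \<Psi>" "y \<in> Y"
    then show "\<phi> y \<le> max C C' * Q (max k k') y"
      using C(2) C'(2) bounds by (meson UnE order_trans)
  qed (use C(1) in simp)
qed

lemma dominated_finite:
  assumes "Y \<subseteq> X" "finite \<Phi>" "\<And>\<phi>. \<phi> \<in> \<Phi> \<Longrightarrow> dominated Y {\<phi>}"
  shows "dominated Y \<Phi>"
  using assms(2,3)
proof (induction \<Phi> rule: finite_induct)
  case empty
  show ?case by (rule dominatedI[where C=0]) auto
next
  case (insert \<phi> \<Phi>)
  then show ?case
    using dominated_Un[OF assms(1), of "{\<phi>}" \<Phi>] by simp
qed

lemma continuous_map_iff_dominated: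
  assumes f: "clinear_on X f"
  shows "continuous_map \<tau> euclidean f \<longleftrightarrow> dominated X {\<lambda>x. cmod (f x)}"
proof
  assume "continuous_map \<tau> euclidean f"
  then have "openin \<tau> {x \<in> X. f x \<in> ball 0 1}"
    using openin_continuous_map_preimage[of \<tau> euclidean f "ball 0 1"] topspace_fk_topology
    by simp
  moreover have "0 \<in> {x \<in> X. f x \<in> ball 0 1}"
    using clinear_on_scale[OF f X_0, of 0] X_0 by (simp add: fun_eq_iff)
  ultimately obtain k e where e: "e > 0" "{y\<in>X. Q k (y - 0) < e} \<subseteq> {x \<in> X. f x \<in> ball 0 1}"
    unfolding openin_fk_topology by blast
  have "cmod (f x) \<le> (2 / e) * Q k x" if x: "x \<in> X" for x
  proof (rule field_le_epsilon)
    fix d :: real assume "d > 0"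
    define t where "t = e / (2 * Q k x + d * e)"
    have "Q k x \<ge> 0" using Q_nonneg[OF x] .
    then have "2 * Q k x + d * e > 0" using e(1) \<open>d > 0\<close> by (simp add: add_nonneg_pos)
    then have t: "t > 0" "t * (2 * Q k x + d * e) = e" using e(1)
      by (simp_all add: t_def)
    have "t * Q k x < t * (2 * Q k x + d * e)"
      using t(1) \<open>Q k x \<ge> 0\<close> mult_pos_pos[OF \<open>d > 0\<close> e(1)]
      by (intro mult_strict_left_mono) auto
    then have "Q k (complex_of_real t *\<^sub>C x) < e"
      using Q_scale[OF x] t by simp
    then have "cmod (f (complex_of_real t *\<^sub>C x)) < 1"
      using e(2) X_scale[OF x] by auto
    then have "t * cmod (f x) < 1"
      using clinear_on_scale[OF f x] t(1) by (simp add: norm_mult)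
    then have "cmod (f x) < 1 / t" using t(1) by (simp add: field_simps)
    also have "1 / t = (2 / e) * Q k x + d"
      using e(1) t by (simp add: t_def field_simps)
    finally show "cmod (f x) \<le> (2 / e) * Q k x + d" by simp
  qed
  then show "dominated X {\<lambda>x. cmod (f x)}"
    using e(1) by (intro dominatedI[where C="2 / e" and k=k]) auto
next
  assume "dominated X {\<lambda>x. cmod (f x)}"
  then obtain C k where "C \<ge> 0" "\<forall>\<phi>\<in>{\<lambda>x. cmod (f x)}. \<forall>y\<in>X. \<phi> y \<le> C * Q k y"
    by (rule dominatedE)
  then have C: "C \<ge> 0" "\<And>x. x \<in> X \<Longrightarrow> cmod (f x) \<le> C * Q k x"
    by auto
  show "continuous_map \<tau> euclidean f"
    unfolding continuous_map topspace_fk_topology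
  proof (intro conjI allI impI)
    fix U :: "complex set" assume "openin euclidean U"
    show "openin \<tau> {x \<in> X. f x \<in> U}"
      unfolding openin_fk_topology
    proof (intro conjI ballI)
      fix x assume x: "x \<in> {x \<in> X. f x \<in> U}"
      then obtain e where e: "e > 0" "ball (f x) e \<subseteq> U"
        using \<open>openin euclidean U\<close> open_contains_ball_eq by (metis mem_Collect_eq open_openin)
      have "f y \<in> U" if y: "y \<in> X" "Q k (y - x) < e / (C + 1)" for y
      proof -
        have "cmod (f y - f x) \<le> C * Q k (y - x)"
          using C(2)[OF X_diff[OF y(1)]] clinear_on_diff[OF csubspace f y(1)] x by simp
        also have "\<dots> \<le> C * (e / (C + 1))"
          using y(2) C(1) by (intro mult_left_mono) auto
        also have "\<dots> < e" using e(1) C(1) by (simp add: field_simps)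
        finally show ?thesis using e(2) by (auto simp: dist_norm norm_minus_commute)
      qed
      then show "\<exists>k e. e > 0 \<and> {y\<in>X. Q k (y - x) < e} \<subseteq> {x \<in> X. f x \<in> U}"
        using e(1) C(1) by (intro exI[of _ k] exI[of _ "e / (C + 1)"]) auto
    qed auto
  qed auto
qed

end

context fk_space
begin

lemma norming_functional:
  assumes b: "b \<in> X"
  obtains h where "clinear_on X h" "\<And>y. y \<in> X \<Longrightarrow> cmod (h y) \<le> Q k y" "h b = Q k b"
proof (cases "b = 0")
  case True
  have "clinear_on X (\<lambda>_. 0)" by (simp add: clinear_on_def)
  then show thesis
    using that[of "\<lambda>_. 0"] True Q_0 Q_nonneg by simp
next
  case False
  then obtain j0 where j0: "b j0 \<noteq> 0" by (auto simp: fun_eq_iff)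
  define L where "L = range (\<lambda>c. c *\<^sub>C b)"
  define g where "g y = y j0 / b j0 * Q k b" for y
  have g_line: "g (c *\<^sub>C b) = c * Q k b" for c
    using j0 by (simp add: g_def)
  have "L \<subseteq> X"
    unfolding L_def using X_scale[OF b] by blast
  moreover have "clinear_on L g"
    unfolding clinear_on_def g_def by (simp add: add_divide_distrib distrib_right)
  moreover have "cmod (g y) \<le> Q k y" if "y \<in> L" for y
    using that Q_scale[OF b] Q_nonneg[OF b] unfolding L_def by (auto simp: g_line norm_mult)
  ultimately obtain h where h: "clinear_on X h" "\<And>y. y \<in> L \<Longrightarrow> h y = g y"
    "\<And>y. y \<in> X \<Longrightarrow> cmod (h y) \<le> Q k y"
    using Hahn_Banach_complex[OF csubspace csubspace_line[of b, folded L_def] _ seminorm_on_Q]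
    by blast
  have "b \<in> L"
    unfolding L_def by (rule range_eqI[where x=1]) simp
  then have "h b = Q k b"
    using h(2) g_line[of 1] by simp
  then show thesis using that h by blast
qed

lemma separating_functional:
  assumes M: "csubspace M" "M \<subseteq> X" and x0: "x0 \<in> X" "x0 \<notin> \<tau> closure_of M"
  obtains F where "F \<in> fk_dual X P" "\<And>y. y \<in> M \<Longrightarrow> F y = 0" "F x0 = 1"
proof -
  obtain k e where e: "e > 0" and far: "\<And>y. y \<in> M \<Longrightarrow> e \<le> Q k (y - x0)"
    using x0 in_closure_of_fk_topology[OF M(2)] by (meson not_less)
  have "x0 \<notin> M"
    using far[of x0] e Q_0 by auto
  define N where "N = {m + c *\<^sub>C x0 | m c. m \<in> M}"
  define g where "g y = (THE c. \<exists>m\<in>M. y = m + c *\<^sub>C x0)" for y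
  have g: "g (m + c *\<^sub>C x0) = c" if m: "m \<in> M" for m c
    unfolding g_def
  proof (rule the_equality)
    fix c' assume "\<exists>m'\<in>M. m + c *\<^sub>C x0 = m' + c' *\<^sub>C x0"
    then show "c' = c"
      using adjoin_coefficient_unique[OF M(1) \<open>x0 \<notin> M\<close> m] by metis
  qed (use m in blast)
  have bound: "cmod c * e \<le> Q k (m + c *\<^sub>C x0)" if m: "m \<in> M" for m c
  proof (cases "c = 0")
    case True
    then show ?thesis using Q_nonneg M(2) m by auto
  next
    case False
    define m' where "m' = (- 1 / c) *\<^sub>C m"
    have "m' \<in> M" unfolding m'_def by (rule csubspace_scale[OF M(1) m])
    moreover have "m + c *\<^sub>C x0 = (- c) *\<^sub>C (m' - x0)"
      using False by (simp add: m'_def fun_eq_iff field_simps)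
    moreover have "m' \<in> X" using \<open>m' \<in> M\<close> M(2) by blast
    ultimately show ?thesis
      using far[of m'] Q_scale[OF X_diff[OF _ x0(1)], of m' k "- c"]
      by (simp add: mult_left_mono)
  qed
  have "N \<subseteq> X"
    unfolding N_def using M(2) x0(1) by (blast intro: X_add X_scale)
  moreover have "clinear_on N g"
    unfolding clinear_on_def N_def
  proof (intro conjI ballI allI)
    fix x y assume "x \<in> {m + c *\<^sub>C x0 | m c. m \<in> M}" "y \<in> {m + c *\<^sub>C x0 | m c. m \<in> M}"
    then obtain m c m' c' where mc: "m \<in> M" "m' \<in> M" "x = m + c *\<^sub>C x0" "y = m' + c' *\<^sub>C x0"
      by blast
    then have "x + y = (m + m') + (c + c') *\<^sub>C x0"
      by (simp add: fun_eq_iff algebra_simps)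
    then have "g (x + y) = c + c'"
      using g[OF csubspace_add[OF M(1) mc(1,2)]] by simp
    then show "g (x + y) = g x + g y"
      using g mc by simp
  next
    fix d x assume "x \<in> {m + c *\<^sub>C x0 | m c. m \<in> M}"
    then obtain m c where mc: "m \<in> M" "x = m + c *\<^sub>C x0"
      by blast
    then have "d *\<^sub>C x = d *\<^sub>C m + (d * c) *\<^sub>C x0"
      by (simp add: fun_eq_iff algebra_simps)
    then have "g (d *\<^sub>C x) = d * c"
      using g[OF csubspace_scale[OF M(1) mc(1)]] by simp
    then show "g (d *\<^sub>C x) = d * g x"
      using g mc by simp
  qed
  moreover have "cmod (g y) \<le> Q k y / e" if "y \<in> N" for y
    using that bound g e unfolding N_def by (auto simp: field_simps)
  ultimately obtain F where F: "clinear_on X F" "\<And>y. y \<in> N \<Longrightarrow> F y = g y"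
    "\<And>y. y \<in> X \<Longrightarrow> cmod (F y) \<le> Q k y / e"
    using Hahn_Banach_complex[OF csubspace csubspace_adjoin[OF M(1), of x0, folded N_def] _
        seminorm_on_divide[OF e seminorm_on_Q]]
    by blast
  have "dominated X {\<lambda>y. cmod (F y)}"
    using F(3) e by (intro dominatedI[where C="1 / e" and k=k]) auto
  then have "F \<in> fk_dual X P"
    using F(1) continuous_map_iff_dominated fk_dual_iff by blast
  moreover have inN: "m + c *\<^sub>C x0 \<in> N" if "m \<in> M" for m c
    unfolding N_def using that by blast
  have "F y = 0" if "y \<in> M" for y
    using F(2)[OF inN[OF that, of 0]] g[OF that, of 0] by simp
  moreover have "F x0 = 1"
    using F(2)[OF inN[OF csubspace_0[OF M(1)], of 1]] g[OF csubspace_0[OF M(1)], of 1] by simp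
  ultimately show thesis using that by blast
qed

end

lemma sum_seq_apply: "(\<Sum>j\<in>A. f j) i = (\<Sum>j\<in>A. f j i)"
  for f :: "'a \<Rightarrow> nat \<Rightarrow> complex"
  by (induction A rule: infinite_finite_induct) auto

lemma csubspace_phi: "csubspace phi"
  unfolding csubspace_def
proof (intro conjI ballI allI)
  fix x y assume "x \<in> phi" "y \<in> phi"
  then show "x + y \<in> phi"
    unfolding phi_def by (auto intro: finite_subset[of _ "{j. x j \<noteq> 0} \<union> {j. y j \<noteq> 0}"])
next
  fix c x assume "x \<in> phi"
  then show "c *\<^sub>C x \<in> phi"
    unfolding phi_def by (auto intro: finite_subset[of _ "{j. x j \<noteq> 0}"])
qed (simp add: phi_def)

definition delta :: "nat \<Rightarrow> nat \<Rightarrow> complex" where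
  "delta j = (\<lambda>i. if i = j then 1 else 0)"

lemma delta_in_phi: "delta j \<in> phi"
  unfolding phi_def delta_def by (auto elim: rev_finite_subset[of "{j}"])

lemma finite_support_expansion:
  assumes "finite A" "\<And>i. i \<notin> A \<Longrightarrow> x i = 0"
  shows "x = (\<Sum>j\<in>A. x j *\<^sub>C delta j)"
proof
  fix i
  have "(\<Sum>j\<in>A. x j *\<^sub>C delta j) i = (\<Sum>j\<in>A. if i = j then x j else 0)"
    by (simp add: sum_seq_apply delta_def if_distrib cong: if_cong)
  also have "\<dots> = x i"
    using assms by (simp add: sum.delta)
  finally show "x i = (\<Sum>j\<in>A. x j *\<^sub>C delta j) i" by simp
qed

definition mean_weight :: "(nat \<Rightarrow> nat) \<Rightarrow> (nat \<Rightarrow> nat) \<Rightarrow> nat \<Rightarrow> nat \<Rightarrow> real" where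
  "mean_weight p q n j = real (q n - max (p n) j) / real (q n - p n)"

lemma Tmean_apply: "Tmean p q n x j = complex_of_real (mean_weight p q n j) * x j"
proof -
  have "(\<Sum>k\<in>{p n<..q n}. section_seq x k j) = (\<Sum>k\<in>{p n<..q n}. if j < k then x j else 0)"
    by (simp add: section_seq_def)
  also have "\<dots> = (\<Sum>k\<in>{k\<in>{p n<..q n}. j < k}. x j)"
    by (rule sum.inter_filter[symmetric]) simp
  also have "{k\<in>{p n<..q n}. j < k} = {max (p n) j<..q n}"
    by auto
  finally show ?thesis
    unfolding Tmean_def mean_weight_def by simp
qed

lemma mean_weight_nonneg: "mean_weight p q n j \<ge> 0"
  by (simp add: mean_weight_def)

lemma mean_weight_le_1: "p n < q n \<Longrightarrow> mean_weight p q n j \<le> 1"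
  by (simp add: mean_weight_def)

lemma mean_weight_eq_0: "q n \<le> j \<Longrightarrow> mean_weight p q n j = 0"
  by (simp add: mean_weight_def)

lemma mean_weight_tendsto_1:
  assumes pq: "\<And>n. p n < q n" and q: "filterlim q at_top sequentially"
  shows "(\<lambda>n. mean_weight p q n j) \<longlonglongrightarrow> 1"
proof -
  have "(\<lambda>n. real j / real (q n)) \<longlonglongrightarrow> 0"
    by (rule real_tendsto_divide_at_top[OF tendsto_const
          filterlim_compose[OF filterlim_real_sequentially q]])
  moreover have "eventually (\<lambda>n. norm (mean_weight p q n j - 1) \<le> real j / real (q n)) sequentially"
    using q unfolding filterlim_at_top
  proof (rule eventually_mono[OF spec[of _ j]])
    fix n assume "j \<le> q n"
    have "p n < q n" by (rule pq)
    show "norm (mean_weight p q n j - 1) \<le> real j / real (q n)"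
    proof (cases "j \<le> p n")
      case True
      then show ?thesis using \<open>p n < q n\<close> by (simp add: mean_weight_def)
    next
      case False
      then have "1 - mean_weight p q n j = (real j - p n) / (real (q n) - p n)"
        using \<open>j \<le> q n\<close> \<open>p n < q n\<close> by (simp add: mean_weight_def of_nat_diff field_simps)
      also have "\<dots> \<le> real j / real (q n)"
      proof -
        have "real j * real (p n) \<le> real (p n) * real (q n)"
          using \<open>j \<le> q n\<close> by (simp add: mult.commute[of "real j"] mult_left_mono)
        then show ?thesis
          using \<open>p n < q n\<close> by (simp add: divide_simps algebra_simps)
      qed
      finally show ?thesis
        using mean_weight_le_1[of p n q j, OF \<open>p n < q n\<close>] by simp
    qed
  qed
  ultimately have "(\<lambda>n. mean_weight p q n j - 1) \<longlonglongrightarrow> 0"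
    by (rule Lim_null_comparison[rotated])
  then show ?thesis by (simp add: LIM_zero_iff)
qed

lemma Tmean_in_phi: "Tmean p q n x \<in> phi"
proof -
  have "{j. Tmean p q n x j \<noteq> 0} \<subseteq> {..<q n}"
    using mean_weight_eq_0[of q n _ p] by (force simp: Tmean_apply not_less[symmetric])
  then show ?thesis
    unfolding phi_def by (auto intro: finite_subset)
qed

lemma Tmean_add: "Tmean p q n (x + y) = Tmean p q n x + Tmean p q n y"
  by (simp add: fun_eq_iff Tmean_apply distrib_left)

lemma Tmean_diff: "Tmean p q n (x - y) = Tmean p q n x - Tmean p q n y"
  by (simp add: fun_eq_iff Tmean_apply right_diff_distrib)

lemma Tmean_cscale: "Tmean p q n (c *\<^sub>C x) = c *\<^sub>C Tmean p q n x"
  by (simp add: fun_eq_iff Tmean_apply)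

context fk_space
begin

context
  assumes phi_X: "phi \<subseteq> X"
begin

lemma coordinates_dominated: "dominated X ((\<lambda>j x. cmod (x j)) ` {..<N})"
proof (rule dominated_finite)
  have "clinear_on X (\<lambda>x. x j)" for j
    by (simp add: clinear_on_def)
  then show "dominated X {\<phi>}" if "\<phi> \<in> (\<lambda>j x. cmod (x j)) ` {..<N}" for \<phi>
    using that continuous_map_iff_dominated coordinate_continuous by blast
qed auto

lemma Q_finite_support:
  assumes "finite A" "\<And>i. i \<notin> A \<Longrightarrow> x i = 0"
  shows "Q k x \<le> (\<Sum>j\<in>A. cmod (x j) * Q k (delta j))"
proof -
  have delta_X: "delta j \<in> X" for j
    using delta_in_phi phi_X by blast
  have "Q k x = Q k (\<Sum>j\<in>A. x j *\<^sub>C delta j)"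
    using finite_support_expansion[OF assms] by simp
  also have "\<dots> \<le> (\<Sum>j\<in>A. Q k (x j *\<^sub>C delta j))"
    by (rule Q_sum[OF assms(1) X_scale[OF delta_X]])
  also have "\<dots> = (\<Sum>j\<in>A. cmod (x j) * Q k (delta j))"
    using Q_scale[OF delta_X] by simp
  finally show ?thesis .
qed

lemma Tmean_dominated:
  assumes "p n < q n"
  shows "dominated X {\<lambda>x. Q k (Tmean p q n x)}"
proof -
  obtain C K where C: "C \<ge> 0" "\<forall>\<phi>\<in>(\<lambda>j x. cmod (x j)) ` {..<q n}. \<forall>x\<in>X. \<phi> x \<le> C * Q K x"
    using coordinates_dominated by (rule dominatedE)
  then have coordinate: "cmod (x j) \<le> C * Q K x" if "x \<in> X" "j < q n" for x j
    using that by auto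
  define D where "D = (\<Sum>j<q n. Q k (delta j))"
  have "Q k (Tmean p q n x) \<le> (C * D) * Q K x" if x: "x \<in> X" for x
  proof -
    have "Q k (Tmean p q n x) \<le> (\<Sum>j<q n. cmod (Tmean p q n x j) * Q k (delta j))"
      by (rule Q_finite_support) (simp_all add: Tmean_apply mean_weight_eq_0)
    also have "\<dots> \<le> (\<Sum>j<q n. (C * Q K x) * Q k (delta j))"
    proof (rule sum_mono)
      fix j assume j: "j \<in> {..<q n}"
      have "cmod (Tmean p q n x j) \<le> cmod (x j)"
        using mean_weight_nonneg[of p q n j] mean_weight_le_1[of p n q j, OF assms]
        by (simp add: Tmean_apply norm_mult mult_left_le_one_le)
      also have "\<dots> \<le> C * Q K x"
        using coordinate x j by simp
      finally show "cmod (Tmean p q n x j) * Q k (delta j) \<le> (C * Q K x) * Q k (delta j)"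
        using Q_nonneg delta_in_phi phi_X by (blast intro: mult_right_mono)
    qed
    also have "\<dots> = (C * D) * Q K x"
      by (simp add: D_def sum_distrib_left algebra_simps)
    finally show ?thesis .
  qed
  moreover have "C * D \<ge> 0"
    using C(1) Q_nonneg delta_in_phi phi_X unfolding D_def by (blast intro: sum_nonneg mult_nonneg_nonneg)
  ultimately show ?thesis
    by (intro dominatedI[where C="C * D" and k=K]) auto
qed

lemma Tmean_tendsto_on_phi:
  assumes pq: "\<And>n. p n < q n" and q: "filterlim q at_top sequentially" and x: "x \<in> phi"
  shows "limitin \<tau> (\<lambda>n. Tmean p q n x) x sequentially"
proof -
  obtain N where N: "\<And>j. x j \<noteq> 0 \<Longrightarrow> j < N"
    using x unfolding phi_def finite_nat_set_iff_bounded by blast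
  have "(\<lambda>n. Q k (Tmean p q n x - x)) \<longlonglongrightarrow> 0" for k
  proof (rule Lim_null_comparison)
    define b where "b n = (\<Sum>j<N. \<bar>mean_weight p q n j - 1\<bar> * cmod (x j) * Q k (delta j))" for n
    have "b \<longlonglongrightarrow> (\<Sum>j<N. \<bar>1 - 1\<bar> * cmod (x j) * Q k (delta j))"
      unfolding b_def by (intro tendsto_intros mean_weight_tendsto_1[OF pq q])
    then show "b \<longlonglongrightarrow> 0" by simp
    have "cmod ((Tmean p q n x - x) j) = \<bar>mean_weight p q n j - 1\<bar> * cmod (x j)" for n j
    proof -
      have "(Tmean p q n x - x) j = complex_of_real (mean_weight p q n j - 1) * x j"
        by (simp add: Tmean_apply algebra_simps)
      then show ?thesis by (metis norm_mult norm_of_real)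
    qed
    note weight_norm = this
    have "Q k (Tmean p q n x - x) \<le> b n" for n
    proof -
      have "(Tmean p q n x - x) i = 0" if "i \<notin> {..<N}" for i
        using N[of i] that by (auto simp: Tmean_apply)
      then have "Q k (Tmean p q n x - x) \<le> (\<Sum>j<N. cmod ((Tmean p q n x - x) j) * Q k (delta j))"
        by (intro Q_finite_support) auto
      then show ?thesis
        unfolding b_def weight_norm .
    qed
    moreover have "Q k (Tmean p q n x - x) \<ge> 0" for n
      using Q_nonneg X_diff Tmean_in_phi phi_X x by blast
    ultimately show "eventually (\<lambda>n. norm (Q k (Tmean p q n x - x)) \<le> b n) sequentially"
      by (intro always_eventually) simp
  qed
  moreover have "Tmean p q n x \<in> X" for n
    using Tmean_in_phi phi_X by blast
  ultimately show ?thesis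
    using x phi_X by (subst limitin_fk_topology) blast+
qed

end

end

fun gliding_sign :: "(nat \<Rightarrow> nat \<Rightarrow> complex) \<Rightarrow> nat \<Rightarrow> complex" where
  "gliding_sign c n =
     (if cmod (c n n) \<le> cmod ((\<Sum>l<n. gliding_sign c l * c n l) + c n n) then 1 else -1)"

declare gliding_sign.simps [simp del]

lemma norm_gliding_sign [simp]: "cmod (gliding_sign c n) = 1"
  by (simp add: gliding_sign.simps[of c n])

lemma gliding_sign_partial_sum: "cmod (c n n) \<le> cmod (\<Sum>l\<le>n. gliding_sign c l * c n l)"
proof -
  define a where "a = (\<Sum>l<n. gliding_sign c l * c n l)"
  have sum_eq: "(\<Sum>l\<le>n. gliding_sign c l * c n l) = a + gliding_sign c n * c n n"
    by (simp add: a_def lessThan_Suc_atMost[symmetric])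
  show ?thesis
  proof (cases "cmod (c n n) \<le> cmod (a + c n n)")
    case True
    then show ?thesis
      using sum_eq by (simp add: gliding_sign.simps[of c n] a_def[symmetric])
  next
    case False
    have "2 * cmod (c n n) = cmod ((a + c n n) - (a - c n n))"
      by (simp add: norm_mult[symmetric])
    also have "\<dots> \<le> cmod (a + c n n) + cmod (a - c n n)"
      by (rule norm_triangle_ineq4)
    finally show ?thesis
      using False sum_eq by (simp add: gliding_sign.simps[of c n] a_def[symmetric])
  qed
qed

lemma (in fk_space) series_of_functionals_in_dual:
  assumes w: "summable w" "\<And>l. cmod (t l) \<le> w l"
    and h: "\<And>l. clinear_on X (h l)" "\<And>l y. y \<in> X \<Longrightarrow> cmod (h l y) \<le> Q k y"
  shows "(\<lambda>y. \<Sum>l. t l * h l y) \<in> fk_dual X P"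
proof -
  have term_le: "norm (t l * h l y) \<le> w l * Q k y" if "y \<in> X" for l y
    using w(2)[of l] h(2)[OF that, of l] by (simp add: norm_mult mult_mono')
  have summ: "summable (\<lambda>l. t l * h l y)" if "y \<in> X" for y
    by (rule summable_comparison_test'[OF summable_mult2[OF w(1)] term_le[OF that]])
  define F where "F y = (\<Sum>l. t l * h l y)" for y
  have "clinear_on X F"
    unfolding clinear_on_def
  proof (intro conjI ballI allI)
    fix x y assume "x \<in> X" "y \<in> X"
    then show "F (x + y) = F x + F y"
      unfolding F_def using suminf_add[OF summ summ] clinear_on_add[OF h(1)]
      by (simp add: distrib_left)
  next
    fix c x assume "x \<in> X"
    then show "F (c *\<^sub>C x) = c * F x"
      unfolding F_def using suminf_mult[OF summ, of x c] clinear_on_scale[OF h(1)]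
      by (simp add: algebra_simps)
  qed
  moreover have "cmod (F y) \<le> suminf w * Q k y" if "y \<in> X" for y
  proof -
    have "cmod (F y) \<le> (\<Sum>l. w l * Q k y)"
      unfolding F_def by (rule norm_suminf_le[OF term_le[OF that] summable_mult2[OF w(1)]])
    also have "\<dots> = suminf w * Q k y"
      by (rule suminf_mult2[OF w(1), symmetric])
    finally show ?thesis .
  qed
  moreover have "suminf w \<ge> 0"
    using w norm_ge_zero order_trans by (blast intro: suminf_nonneg)
  ultimately show ?thesis
    unfolding F_def[symmetric] fk_dual_iff continuous_map_iff_dominated[OF \<open>clinear_on X F\<close>]
    by (intro conjI dominatedI[where C="suminf w" and k=k]) auto
qed

lemma geometric_third_tail: "(\<Sum>l. (1/3::real) ^ (l + Suc n)) = (1/3) ^ n / 2"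
proof -
  have "(\<lambda>l. (1/3::real) ^ (l + Suc n)) = (\<lambda>l. (1/3) ^ l * (1/3) ^ Suc n)"
    by (simp add: power_add)
  then have "(\<Sum>l. (1/3::real) ^ (l + Suc n)) = (\<Sum>l. (1/3::real) ^ l) * (1/3) ^ Suc n"
    using suminf_mult2[OF summable_geometric[of "1/3::real"], of "(1/3) ^ Suc n"] by simp
  also have "\<dots> = (1/3) ^ n / 2"
    by (simp add: suminf_geometric)
  finally show ?thesis .
qed

theorem (in fk_space) weakly_bounded_imp_bounded:
  assumes B: "\<And>n. B n \<in> X"
    and weak: "\<And>f. f \<in> fk_dual X P \<Longrightarrow> bounded (range (\<lambda>n. f (B n)))"
  shows "bdd_above (range (\<lambda>n. Q k (B n)))"
proof (rule ccontr)
  assume "\<not> bdd_above (range (\<lambda>n. Q k (B n)))"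
  then have "\<exists>n. Q k (B n) > 2 * 3 ^ m * (real m + 1)" for m
    by (meson bdd_above.I2 not_le)
  then obtain \<nu> where \<nu>: "\<And>m. Q k (B (\<nu> m)) > 2 * 3 ^ m * (real m + 1)"
    by metis
  define b where "b m = B (\<nu> m)" for m
  have "\<exists>h. clinear_on X h \<and> (\<forall>y\<in>X. cmod (h y) \<le> Q k y) \<and> h (b m) = Q k (b m)" for m
    using norming_functional[OF B[of "\<nu> m"], of k] unfolding b_def by metis
  then obtain h where h: "\<And>m. clinear_on X (h m)" "\<And>m y. y \<in> X \<Longrightarrow> cmod (h m y) \<le> Q k y"
    "\<And>m. h m (b m) = Q k (b m)"
    by metis
  define c where "c n l = complex_of_real ((1/3) ^ l) * h l (b n)" for n l
  define t where "t l = gliding_sign c l * complex_of_real ((1/3) ^ l)" for l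
  define F where "F y = (\<Sum>l. t l * h l y)" for y
  have "F \<in> fk_dual X P"
    unfolding F_def
    by (rule series_of_functionals_in_dual[OF summable_geometric[of "1/3"] _ h(1,2)])
      (simp_all add: t_def norm_mult norm_power)
  then obtain M where M: "\<And>n. cmod (F (B n)) \<le> M"
    using weak unfolding bounded_iff by blast
  have term_le: "norm (t l * h l (b n)) \<le> (1/3) ^ l * Q k (b n)" for l n
    using h(2)[OF B, of l "\<nu> n"] by (simp add: t_def b_def norm_mult norm_power mult_left_mono)
  have "cmod (F (b n)) > real n" for n
  proof -
    have summ: "summable (\<lambda>l. t l * h l (b n))"
      by (rule summable_comparison_test'[OF summable_mult2[OF summable_geometric] term_le]) simp
    have "Q k (b n) \<ge> 0"
      unfolding b_def by (rule Q_nonneg[OF B])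
    then have head: "(1/3) ^ n * Q k (b n) \<le> cmod (\<Sum>l<Suc n. t l * h l (b n))"
      using gliding_sign_partial_sum[of c n] h(3)
      by (simp add: c_def t_def lessThan_Suc_atMost mult.assoc norm_mult norm_power)
    have "cmod (\<Sum>l. t (l + Suc n) * h (l + Suc n) (b n)) \<le> (\<Sum>l. (1/3) ^ (l + Suc n) * Q k (b n))"
      by (rule norm_suminf_le[OF term_le summable_mult2[OF summable_ignore_initial_segment]])
        (simp add: summable_geometric)
    also have "\<dots> = (1/3) ^ n / 2 * Q k (b n)"
      using suminf_mult2[OF summable_ignore_initial_segment[OF summable_geometric[of "1/3::real"]],
          of "Suc n" "Q k (b n)"]
      by (simp only: geometric_third_tail) simp
    finally have tail: "cmod (\<Sum>l. t (l + Suc n) * h (l + Suc n) (b n)) \<le> (1/3) ^ n / 2 * Q k (b n)" .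
    have "F (b n) = (\<Sum>l. t (l + Suc n) * h (l + Suc n) (b n)) + (\<Sum>l<Suc n. t l * h l (b n))"
      unfolding F_def by (rule suminf_split_initial_segment[OF summ])
    then have "cmod (F (b n)) \<ge> (1/3) ^ n * Q k (b n) - (1/3) ^ n / 2 * Q k (b n)"
      using head tail norm_triangle_ineq4[of "F (b n)" "\<Sum>l. t (l + Suc n) * h (l + Suc n) (b n)"]
      by (simp add: algebra_simps)
    moreover have "(1/3::real) ^ n * Q k (b n) - (1/3) ^ n / 2 * Q k (b n) = Q k (b n) / (2 * 3 ^ n)"
      by (simp add: field_simps power_divide)
    moreover have "Q k (b n) / (2 * 3 ^ n) > real n"
    proof -
      have "real n * (2 * 3 ^ n) \<le> 2 * 3 ^ n * (real n + 1)"
        by (simp add: algebra_simps)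
      then have "real n * (2 * 3 ^ n) < Q k (b n)"
        using \<nu>[of n] unfolding b_def by linarith
      then show ?thesis by (simp add: field_simps)
    qed
    ultimately show ?thesis by linarith
  qed
  then show False
    using M[of "\<nu> (nat \<lceil>M\<rceil>)"] unfolding b_def by (smt (verit) of_nat_ceiling)
qed

lemma sum_half_powers_le: "(\<Sum>l\<in>{m..<M}. (1/2::real) ^ l) \<le> 2 * (1/2) ^ m"
proof (cases "m \<le> M")
  case True
  then have "(\<Sum>l\<in>{m..<M}. (1/2::real) ^ l) = 2 * (1/2) ^ m - 2 * (1/2) ^ M"
    by (induction M rule: dec_induct) simp_all
  then show ?thesis by simp
qed simp

lemma sum_telescope_ivl:
  fixes x :: "nat \<Rightarrow> 'a::ab_group_add"
  assumes "\<And>l. x (Suc l) = x l + z l" "m \<le> M"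
  shows "x M - x m = (\<Sum>l\<in>{m..<M}. z l)"
  using assms(2) by (induction M rule: dec_induct) (simp_all add: assms(1) algebra_simps)

context fk_space
begin

context
  fixes Y :: "(nat \<Rightarrow> complex) set" and A :: "nat \<Rightarrow> (nat \<Rightarrow> complex) \<Rightarrow> nat \<Rightarrow> complex"
    and k :: nat
  assumes Y: "csubspace Y" "Y \<subseteq> X" "closedin \<tau> Y"
    and A_X: "\<And>n y. y \<in> Y \<Longrightarrow> A n y \<in> X"
    and A_add: "\<And>n x y. x \<in> Y \<Longrightarrow> y \<in> Y \<Longrightarrow> A n (x + y) = A n x + A n y"
    and A_cscale: "\<And>n c y. y \<in> Y \<Longrightarrow> A n (c *\<^sub>C y) = c *\<^sub>C A n y"
    and A_dominated: "\<And>n. dominated Y {\<lambda>y. Q k (A n y)}"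
    and A_bounded: "\<And>y. y \<in> Y \<Longrightarrow> bdd_above (range (\<lambda>n. Q k (A n y)))"
begin

lemma A_minus: "y \<in> Y \<Longrightarrow> A n (- y) = - A n y"
  using A_cscale[of y n "-1"] by simp

lemma A_0: "A n 0 = 0"
  using A_cscale[OF csubspace_0[OF Y(1)], of n 0] by simp

lemma A_sum: "(\<And>l. l \<in> S \<Longrightarrow> z l \<in> Y) \<Longrightarrow> A n (\<Sum>l\<in>S. z l) = (\<Sum>l\<in>S. A n (z l))"
proof (induction S rule: infinite_finite_induct)
  case (infinite S)
  then show ?case by (simp only: sum.infinite[OF infinite.hyps] A_0)
next
  case empty
  then show ?case by (simp only: sum.empty A_0)
next
  case (insert l S)
  have "z l \<in> Y" "(\<Sum>l\<in>S. z l) \<in> Y"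
    using insert.prems csubspace_sum[OF Y(1), of S z] by auto
  then have "A n (z l + (\<Sum>l\<in>S. z l)) = A n (z l) + A n (\<Sum>l\<in>S. z l)"
    by (rule A_add)
  also have "A n (\<Sum>l\<in>S. z l) = (\<Sum>l\<in>S. A n (z l))"
    using insert.IH insert.prems by blast
  finally show ?case
    by (simp only: sum.insert[OF insert.hyps])
qed

context
  assumes not_dominated: "\<not> dominated Y (range (\<lambda>n y. Q k (A n y)))"
begin

lemma bump:
  assumes "\<delta> > 0"
  obtains z n where "z \<in> Y" "Q K z \<le> \<delta>" "M \<le> Q k (A n z)"
proof -
  define M' where "M' = max M 1"
  have "M' > 0" by (simp add: M'_def)
  have "\<not> (\<forall>\<phi>\<in>range (\<lambda>n y. Q k (A n y)). \<forall>y\<in>Y. \<phi> y \<le> M' / \<delta> * Q K y)"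
  proof
    assume "\<forall>\<phi>\<in>range (\<lambda>n y. Q k (A n y)). \<forall>y\<in>Y. \<phi> y \<le> M' / \<delta> * Q K y"
    moreover have "M' / \<delta> \<ge> 0" using \<open>M' > 0\<close> \<open>\<delta> > 0\<close> by simp
    ultimately show False using not_dominated unfolding dominated_def by blast
  qed
  then obtain y n where y: "y \<in> Y" and big: "Q k (A n y) > M' / \<delta> * Q K y"
    by (auto simp: not_le)
  define a where "a = Q k (A n y)"
  have "Q K y \<ge> 0" using Q_nonneg y Y(2) by blast
  then have "a > 0"
    using big \<open>M' > 0\<close> \<open>\<delta> > 0\<close> unfolding a_def by (smt (verit) divide_nonneg_pos mult_nonneg_nonneg)
  define z where "z = complex_of_real (M' / a) *\<^sub>C y"
  have yX: "y \<in> X" using y Y(2) by blast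
  have norm_r: "cmod (complex_of_real (M' / a)) = M' / a"
    using \<open>M' > 0\<close> \<open>a > 0\<close> by (simp only: norm_of_real) simp
  have "Q K z = M' / a * Q K y"
    unfolding z_def Q_scale[OF yX] norm_r ..
  also have "\<dots> \<le> \<delta>"
    using big \<open>a > 0\<close> \<open>\<delta> > 0\<close> unfolding a_def by (simp add: field_simps)
  finally have "Q K z \<le> \<delta>" .
  moreover have "Q k (A n z) = M'"
    unfolding z_def A_cscale[OF y] Q_scale[OF A_X[OF y]] norm_r
    using \<open>a > 0\<close> by (simp add: a_def)
  moreover have "z \<in> Y"
    unfolding z_def by (rule csubspace_scale[OF Y(1) y])
  ultimately show thesis
    using that[of z n] by (simp add: M'_def)
qed

lemma gliding_hump_step:
  assumes x: "x \<in> Y"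
  obtains z n where "z \<in> Y" "\<And>i. i \<le> l \<Longrightarrow> Q i z \<le> (1/2) ^ l"
    "\<And>m. m \<le> N \<Longrightarrow> Q k (A m z) \<le> (1/2) ^ l" "real l + 3 \<le> Q k (A n (x + z))"
proof -
  have "dominated Y ((\<lambda>m y. Q k (A m y)) ` {..N})"
    by (rule dominated_finite[OF Y(2)]) (use A_dominated in auto)
  then obtain C K where C: "C \<ge> 0" "\<And>m y. m \<le> N \<Longrightarrow> y \<in> Y \<Longrightarrow> Q k (A m y) \<le> C * Q K y"
    by (rule dominatedE) auto
  have "(1/2::real) ^ l / (1 + C) > 0" using C(1) by simp
  then obtain z n where z: "z \<in> Y" "Q (max l K) z \<le> (1/2) ^ l / (1 + C)"
    and big: "real l + 3 \<le> Q k (A n z)"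
    by (rule bump)
  have small_Q: "Q i z \<le> (1/2) ^ l" if "i \<le> l" for i
  proof -
    have "Q i z \<le> Q (max l K) z" using Q_mono z(1) Y(2) that by auto
    also have "\<dots> \<le> (1/2) ^ l / (1 + C)" by (rule z(2))
    also have "\<dots> \<le> (1/2) ^ l" using C(1) by (simp add: divide_le_eq)
    finally show ?thesis .
  qed
  have small_A: "Q k (A m z) \<le> (1/2) ^ l" if "m \<le> N" for m
  proof -
    have "Q k (A m z) \<le> C * Q (max l K) z"
      using C(2)[OF that z(1)] Q_mono[of z K "max l K"] z(1) Y(2) C(1)
      by (auto intro: order_trans mult_left_mono)
    also have "\<dots> \<le> C * ((1/2) ^ l / (1 + C))" by (rule mult_left_mono[OF z(2) C(1)])
    also have "\<dots> = C / (1 + C) * (1/2) ^ l" by simp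
    also have "\<dots> \<le> (1/2) ^ l" by (rule mult_left_le_one_le) (use C(1) in auto)
    finally show ?thesis .
  qed
  have "A n (x + - z) = A n x - A n z"
    using A_add[OF x csubspace_minus[OF Y(1) z(1)]] A_minus[OF z(1)] by simp
  then have "2 * Q k (A n z) \<le> Q k (A n (x + z)) + Q k (A n (x + - z))"
    using Q_plus_minus[OF A_X[OF x] A_X[OF z(1)], of k] A_add[OF x z(1)] by simp
  then consider "real l + 3 \<le> Q k (A n (x + z))" | "real l + 3 \<le> Q k (A n (x + - z))"
    using big by linarith
  then show thesis
  proof cases
    case 1
    then show thesis using that[of z n] z(1) small_Q small_A by blast
  next
    case 2
    have "Q i (- z) = Q i z" "Q k (A m (- z)) = Q k (A m z)" for i m
      using Q_minus z(1) Y(2) A_X[OF z(1)] A_minus[OF z(1)] by auto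
    then show thesis
      using that[of "- z" n] 2 csubspace_minus[OF Y(1) z(1)] small_Q small_A by simp
  qed
qed

lemma gliding_hump_sequence:
  obtains x z n where "\<And>l. x l \<in> Y" "\<And>l. z l \<in> Y" "\<And>l. x (Suc l) = x l + z l"
    "\<And>i l. i \<le> l \<Longrightarrow> Q i (z l) \<le> (1/2) ^ l"
    "\<And>j l. j < l \<Longrightarrow> Q k (A (n j) (z l)) \<le> (1/2) ^ l"
    "\<And>l. real l + 3 \<le> Q k (A (n l) (x (Suc l)))"
proof -
  define R where "R l s s' \<longleftrightarrow> (\<exists>z n. z \<in> Y \<and> (\<forall>i\<le>l. Q i z \<le> (1/2) ^ l) \<and>
      (\<forall>m\<le>snd s. Q k (A m z) \<le> (1/2) ^ l) \<and> real l + 3 \<le> Q k (A n (fst s + z)) \<and>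
      s' = (fst s + z, max (snd s) n))"
    for l and s s' :: "(nat \<Rightarrow> complex) \<times> nat"
  have "\<exists>f. \<forall>l. fst (f l) \<in> Y \<and> R l (f l) (f (Suc l))"
  proof (rule dependent_nat_choice)
    show "\<exists>s :: (nat \<Rightarrow> complex) \<times> nat. fst s \<in> Y"
      using csubspace_0[OF Y(1)] by auto
  next
    fix s :: "(nat \<Rightarrow> complex) \<times> nat" and l assume s: "fst s \<in> Y"
    obtain z n where "z \<in> Y" "\<And>i. i \<le> l \<Longrightarrow> Q i z \<le> (1/2) ^ l"
      "\<And>m. m \<le> snd s \<Longrightarrow> Q k (A m z) \<le> (1/2) ^ l" "real l + 3 \<le> Q k (A n (fst s + z))"
      by (rule gliding_hump_step[OF s, where l=l and N="snd s"]) blast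
    moreover have "fst s + z \<in> Y"
      using csubspace_add[OF Y(1) s \<open>z \<in> Y\<close>] .
    ultimately show "\<exists>s'. fst s' \<in> Y \<and> R l s s'"
      unfolding R_def by (intro exI[of _ "(fst s + z, max (snd s) n)"]) auto
  qed
  then obtain f where f: "\<And>l. fst (f l) \<in> Y" "\<And>l. R l (f l) (f (Suc l))"
    by blast
  then have "\<forall>l. \<exists>z n. z \<in> Y \<and> (\<forall>i\<le>l. Q i z \<le> (1/2) ^ l) \<and>
      (\<forall>m\<le>snd (f l). Q k (A m z) \<le> (1/2) ^ l) \<and> real l + 3 \<le> Q k (A n (fst (f l) + z)) \<and>
      f (Suc l) = (fst (f l) + z, max (snd (f l)) n)"
    unfolding R_def by blast
  then obtain z n where z: "\<And>l. z l \<in> Y" "\<And>i l. i \<le> l \<Longrightarrow> Q i (z l) \<le> (1/2) ^ l"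
    "\<And>l m. m \<le> snd (f l) \<Longrightarrow> Q k (A m (z l)) \<le> (1/2) ^ l"
    "\<And>l. real l + 3 \<le> Q k (A (n l) (fst (f l) + z l))"
    "\<And>l. f (Suc l) = (fst (f l) + z l, max (snd (f l)) (n l))"
    by metis
  have "n j \<le> snd (f l)" if "j < l" for j l
    using that
  proof (induction l)
    case (Suc l)
    then show ?case using z(5)[of l] by (cases "j = l") auto
  qed simp
  then show thesis
    using that[of "\<lambda>l. fst (f l)" z n] f(1) z by simp
qed

lemma A_diff: "x \<in> Y \<Longrightarrow> y \<in> Y \<Longrightarrow> A n (x - y) = A n x - A n y"
  using A_add[of x "- y" n] A_minus[of y n] csubspace_minus[OF Y(1)] by simp

lemma gliding_hump_limit:
  obtains x n where "x \<in> Y" "\<And>j. real j + 2 \<le> Q k (A (n j) x)"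
proof -
  obtain x z n where x: "\<And>l. x l \<in> Y" and z: "\<And>l. z l \<in> Y" and step: "\<And>l. x (Suc l) = x l + z l"
    and small_Q: "\<And>i l. i \<le> l \<Longrightarrow> Q i (z l) \<le> (1/2) ^ l"
    and small_A: "\<And>j l. j < l \<Longrightarrow> Q k (A (n j) (z l)) \<le> (1/2) ^ l"
    and big: "\<And>l. real l + 3 \<le> Q k (A (n l) (x (Suc l)))"
    by (rule gliding_hump_sequence) blast
  have xX: "x l \<in> X" for l using x Y(2) by blast
  have cauchy: "Q i (x M - x m) \<le> 2 * (1/2) ^ m" if "i \<le> m" "m \<le> M" for i m M
  proof -
    have "Q i (x M - x m) \<le> (\<Sum>l\<in>{m..<M}. Q i (z l))"
      unfolding sum_telescope_ivl[of x z, OF step that(2)] using z Y(2) by (intro Q_sum) auto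
    also have "\<dots> \<le> (\<Sum>l\<in>{m..<M}. (1/2) ^ l)"
      using small_Q that(1) by (intro sum_mono) auto
    also have "\<dots> \<le> 2 * (1/2) ^ m" by (rule sum_half_powers_le)
    finally show ?thesis .
  qed
  obtain x_lim where "x_lim \<in> X" and lim: "limitin \<tau> x x_lim sequentially"
  proof (rule fk_complete[OF xX])
    fix i and e :: real assume "e > 0"
    then obtain N0 where N0: "(1/2) ^ N0 < e / 2"
      using real_arch_pow_inv[of "e / 2" "1/2"] by auto
    have "Q i (x M - x m) < e" if "m \<ge> N0 + i" "m \<le> M" for m M
    proof -
      have "(1/2::real) ^ m \<le> (1/2) ^ N0"
        using that(1) by (intro power_decreasing) auto
      then show ?thesis
        using cauchy[of i m M] that N0 by linarith
    qed
    note tail_small = this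
    have "Q i (x m - x m') < e" if "m \<ge> N0 + i" "m' \<ge> N0 + i" for m m'
    proof (cases "m \<le> m'")
      case True
      then show ?thesis
        using tail_small[of m m'] that Q_diff_commute[OF xX xX, of i m m'] by simp
    next
      case False
      then show ?thesis
        using tail_small[of m' m] that by simp
    qed
    then show "\<exists>N. \<forall>m\<ge>N. \<forall>m'\<ge>N. Q i (x m - x m') < e" by blast
  qed
  have "x_lim \<in> Y"
    using limitin_closedin[OF lim Y(3)] x by simp
  moreover have "real j + 2 \<le> Q k (A (n j) x_lim)" for j
  proof -
    obtain C K where C: "C \<ge> 0" "\<forall>\<phi>\<in>{\<lambda>y. Q k (A (n j) y)}. \<forall>y\<in>Y. \<phi> y \<le> C * Q K y"
      using A_dominated by (rule dominatedE)
    then have C_bound: "Q k (A (n j) y) \<le> C * Q K y" if "y \<in> Y" for y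
      using that by simp
    have tail: "Q k (A (n j) (x_lim - x (Suc j))) \<le> C * Q K (x_lim - x M) + 1" if "M \<ge> Suc j" for M
    proof -
      have "Q k (A (n j) (x M - x (Suc j))) \<le> (\<Sum>l\<in>{Suc j..<M}. Q k (A (n j) (z l)))"
        unfolding sum_telescope_ivl[of x z, OF step that] A_sum[OF z] using A_X z by (intro Q_sum) auto
      also have "\<dots> \<le> (\<Sum>l\<in>{Suc j..<M}. (1/2) ^ l)"
        using small_A by (intro sum_mono) auto
      also have "\<dots> \<le> 1"
        using sum_half_powers_le[of "Suc j" M] power_le_one[of "1/2::real" j] by simp
      finally have head: "Q k (A (n j) (x M - x (Suc j))) \<le> 1" .
      have d: "x_lim - x M \<in> Y" "x M - x (Suc j) \<in> Y"
        using csubspace_diff[OF Y(1)] \<open>x_lim \<in> Y\<close> x by blast+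
      have "x_lim - x (Suc j) = (x_lim - x M) + (x M - x (Suc j))"
        by simp
      then have "Q k (A (n j) (x_lim - x (Suc j)))
          = Q k (A (n j) (x_lim - x M) + A (n j) (x M - x (Suc j)))"
        using A_add[OF d] by simp
      also have "\<dots> \<le> Q k (A (n j) (x_lim - x M)) + Q k (A (n j) (x M - x (Suc j)))"
        by (rule Q_add[OF A_X[OF d(1)] A_X[OF d(2)]])
      also have "\<dots> \<le> C * Q K (x_lim - x M) + 1"
        using C_bound[OF d(1)] head by linarith
      finally show ?thesis .
    qed
    have "(\<lambda>M. C * Q K (x_lim - x M) + 1) \<longlonglongrightarrow> C * 0 + 1"
      using lim Q_diff_commute[OF xX \<open>x_lim \<in> X\<close>] unfolding limitin_fk_topology[OF xX]
      by (intro tendsto_intros) simp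
    then have lim1: "(\<lambda>M. C * Q K (x_lim - x M) + 1) \<longlonglongrightarrow> 1"
      by simp
    have "eventually (\<lambda>M. Q k (A (n j) (x_lim - x (Suc j))) \<le> C * Q K (x_lim - x M) + 1)
        sequentially"
      using tail by (rule eventually_sequentiallyI)
    then have "Q k (A (n j) (x_lim - x (Suc j))) \<le> 1"
      using tendsto_lowerbound[OF lim1 _ trivial_limit_sequentially] by blast
    moreover have "\<bar>Q k (A (n j) x_lim) - Q k (A (n j) (x (Suc j)))\<bar>
        \<le> Q k (A (n j) x_lim - A (n j) (x (Suc j)))"
      by (rule Q_reverse_triangle[OF A_X[OF \<open>x_lim \<in> Y\<close>] A_X[OF x]])
    moreover have "A (n j) x_lim - A (n j) (x (Suc j)) = A (n j) (x_lim - x (Suc j))"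
      using A_diff \<open>x_lim \<in> Y\<close> x by simp
    ultimately show ?thesis
      using big[of j] by (simp add: abs_le_iff)
  qed
  ultimately show thesis by (rule that)
qed

end

theorem uniform_boundedness: "dominated Y (range (\<lambda>n y. Q k (A n y)))"
proof (rule ccontr)
  assume "\<not> dominated Y (range (\<lambda>n y. Q k (A n y)))"
  then obtain x n where x: "x \<in> Y" and big: "\<And>j. real j + 2 \<le> Q k (A (n j) x)"
    by (rule gliding_hump_limit) blast
  obtain B where "\<And>m. Q k (A m x) \<le> B"
    using A_bounded[OF x] by (auto simp: bdd_above_def)
  then show False
    using big[of "nat \<lceil>B\<rceil>"] by (smt (verit) of_nat_ceiling)
qed

end

end

context fk_space
begin

lemma dominated_subset: "dominated Y \<Phi> \<Longrightarrow> Z \<subseteq> Y \<Longrightarrow> dominated Z \<Phi>"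
  unfolding dominated_def by blast

lemma csubspace_closure:
  assumes M: "csubspace M" "M \<subseteq> X"
  shows "csubspace (\<tau> closure_of M)"
  unfolding csubspace_def
proof (intro conjI ballI allI)
  show "0 \<in> \<tau> closure_of M"
    using closure_of_subset[of M \<tau>] csubspace_0[OF M(1)] M(2) topspace_fk_topology by auto
next
  fix x y assume x: "x \<in> \<tau> closure_of M" and y: "y \<in> \<tau> closure_of M"
  have "\<exists>a\<in>M. Q k (a - (x + y)) < e" if "e > 0" for k e
  proof -
    obtain a b where ab: "a \<in> M" "Q k (a - x) < e / 2" "b \<in> M" "Q k (b - y) < e / 2"
      using x y \<open>e > 0\<close> unfolding in_closure_of_fk_topology[OF M(2)] by (meson half_gt_zero)
    have "a + b - (x + y) = (a - x) + (b - y)" by simp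
    then have "Q k (a + b - (x + y)) \<le> Q k (a - x) + Q k (b - y)"
      using Q_add X_diff ab M(2) x y unfolding in_closure_of_fk_topology[OF M(2)] by (metis subsetD)
    then show ?thesis
      using ab csubspace_add[OF M(1) ab(1,3)] by (intro bexI[of _ "a + b"]) auto
  qed
  then show "x + y \<in> \<tau> closure_of M"
    using x y X_add unfolding in_closure_of_fk_topology[OF M(2)] by blast
next
  fix c x assume x: "x \<in> \<tau> closure_of M"
  have "\<exists>a\<in>M. Q k (a - c *\<^sub>C x) < e" if "e > 0" for k e
  proof -
    obtain a where a: "a \<in> M" "Q k (a - x) < e / (cmod c + 1)"
      using x \<open>e > 0\<close> unfolding in_closure_of_fk_topology[OF M(2)] by (meson divide_pos_pos norm_ge_zero add_nonneg_pos zero_less_one)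
    have "c *\<^sub>C a - c *\<^sub>C x = c *\<^sub>C (a - x)" by (simp add: fun_eq_iff algebra_simps)
    then have "Q k (c *\<^sub>C a - c *\<^sub>C x) = cmod c * Q k (a - x)"
      using Q_scale X_diff a M(2) x unfolding in_closure_of_fk_topology[OF M(2)] by (metis subsetD)
    also have "\<dots> \<le> cmod c * (e / (cmod c + 1))"
      using a(2) by (intro mult_left_mono) auto
    also have "\<dots> = e * (cmod c / (cmod c + 1))"
      by simp
    also have "\<dots> < e * 1"
      using \<open>e > 0\<close> norm_ge_zero[of c]
      by (intro mult_strict_left_mono) (simp_all add: divide_less_eq add_nonneg_pos)
    finally show ?thesis
      using csubspace_scale[OF M(1) a(1)] by auto
  qed
  then show "c *\<^sub>C x \<in> \<tau> closure_of M"
    using x X_scale unfolding in_closure_of_fk_topology[OF M(2)] by blast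
qed

lemma limitin_by_equicontinuity:
  assumes Y: "csubspace Y" "Y \<subseteq> X" and D: "D \<subseteq> Y" "Y \<subseteq> \<tau> closure_of D"
    and A_X: "\<And>n y. y \<in> Y \<Longrightarrow> A n y \<in> X"
    and A_diff: "\<And>n x y. x \<in> Y \<Longrightarrow> y \<in> Y \<Longrightarrow> A n (x - y) = A n x - A n y"
    and equicontinuous: "\<And>k. dominated Y (range (\<lambda>n y. Q k (A n y)))"
    and limit_D: "\<And>d. d \<in> D \<Longrightarrow> limitin \<tau> (\<lambda>n. A n d) d sequentially"
    and y: "y \<in> Y"
  shows "limitin \<tau> (\<lambda>n. A n y) y sequentially"
proof -
  have DX: "D \<subseteq> X" using D Y by blast
  have "(\<lambda>n. Q k (A n y - y)) \<longlonglongrightarrow> 0" for k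
  proof (rule LIMSEQ_I)
    fix e :: real assume "e > 0"
    obtain C K where C: "C \<ge> 0" "\<And>n z. z \<in> Y \<Longrightarrow> Q k (A n z) \<le> C * Q K z"
      using equicontinuous[of k] by (rule dominatedE) auto
    have "e / (3 * (C + 1)) > 0" using \<open>e > 0\<close> C(1) by simp
    moreover have "y \<in> \<tau> closure_of D" using D(2) y by blast
    ultimately obtain d where d: "d \<in> D" "Q (max k K) (d - y) < e / (3 * (C + 1))"
      unfolding in_closure_of_fk_topology[OF DX] by blast
    have "d \<in> Y" using d(1) D(1) by blast
    have "(\<lambda>n. Q k (A n d - d)) \<longlonglongrightarrow> 0"
      using limit_D[OF d(1)] limitin_fk_topology[of "\<lambda>n. A n d" d] A_X[OF \<open>d \<in> Y\<close>] by blast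
    moreover have "e / 3 > 0" using \<open>e > 0\<close> by simp
    ultimately obtain N where "\<forall>n\<ge>N. norm (Q k (A n d - d) - 0) < e / 3"
      by (blast dest: LIMSEQ_D)
    then have N: "Q k (A n d - d) < e / 3" if "n \<ge> N" for n
      using that by (auto simp: abs_less_iff)
    show "\<exists>N. \<forall>n\<ge>N. norm (Q k (A n y - y) - 0) < e"
    proof (intro exI allI impI)
      fix n assume "n \<ge> N"
      have yX: "y \<in> X" and dX: "d \<in> X" using y \<open>d \<in> Y\<close> Y(2) by blast+
      have "Q K (y - d) \<le> Q (max k K) (d - y)" "Q k (d - y) \<le> Q (max k K) (d - y)"
        using Q_mono Q_diff_commute[OF yX dX] X_diff yX dX by (metis max.cobounded1 max.cobounded2)+
      have "Q k (A n y - y) \<le> Q k (A n y - A n d) + Q k (A n d - d) + Q k (d - y)"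
        using Q_triangle[OF A_X[OF y] A_X[OF \<open>d \<in> Y\<close>] yX, of k n n]
          Q_triangle[OF A_X[OF \<open>d \<in> Y\<close>] dX yX, of k n]
        by linarith
      also have "Q k (A n y - A n d) \<le> C * Q K (y - d)"
        using C(2)[OF csubspace_diff[OF Y(1) y \<open>d \<in> Y\<close>]] A_diff[OF y \<open>d \<in> Y\<close>] by simp
      finally have "Q k (A n y - y) \<le> C * Q (max k K) (d - y) + e / 3 + Q (max k K) (d - y)"
        using N[OF \<open>n \<ge> N\<close>] \<open>Q K (y - d) \<le> _\<close> \<open>Q k (d - y) \<le> _\<close> C(1)
        by (smt (verit) mult_left_mono)
      also have "\<dots> = (C + 1) * Q (max k K) (d - y) + e / 3"
        by (simp add: algebra_simps)
      also have "\<dots> < (C + 1) * (e / (3 * (C + 1))) + e / 3"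
        using d(2) C(1) by (intro add_strict_right_mono mult_strict_left_mono) auto
      also have "\<dots> = 2 * e / 3"
        using C(1) by (simp add: field_simps add_nonneg_pos)
      also have "\<dots> < e"
        using \<open>e > 0\<close> by simp
      finally show "norm (Q k (A n y - y) - 0) < e"
        using Q_nonneg[OF X_diff[OF A_X[OF y] yX]] by simp
    qed
  qed
  then show ?thesis
    using limitin_fk_topology[of "\<lambda>n. A n y" y] A_X[OF y] y Y(2) by blast
qed

lemma DS_subset_DW: "DS X P p q \<subseteq> DW X P p q"
proof
  fix x assume "x \<in> DS X P p q"
  then have x: "x \<in> X" and lim: "limitin \<tau> (\<lambda>n. Tmean p q n x) x sequentially"
    unfolding DS_def by auto
  have "(\<lambda>n. f (Tmean p q n x)) \<longlonglongrightarrow> f x" if "f \<in> fk_dual X P" for f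
    using continuous_map_limit[OF _ lim, of euclidean f] that fk_dual_iff by (simp add: o_def)
  then show "x \<in> DW X P p q"
    unfolding DW_def using x by blast
qed

lemma DW_subset_closure_phi:
  assumes "phi \<subseteq> X"
  shows "DW X P p q \<subseteq> \<tau> closure_of phi"
proof
  fix x assume "x \<in> DW X P p q"
  then have x: "x \<in> X" and weak: "\<And>f. f \<in> fk_dual X P \<Longrightarrow> (\<lambda>n. f (Tmean p q n x)) \<longlonglongrightarrow> f x"
    unfolding DW_def by auto
  show "x \<in> \<tau> closure_of phi"
  proof (rule ccontr)
    assume "x \<notin> \<tau> closure_of phi"
    then obtain F where F: "F \<in> fk_dual X P" "\<And>y. y \<in> phi \<Longrightarrow> F y = 0" "F x = 1"
      using separating_functional[OF csubspace_phi assms x] by blast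
    have "(\<lambda>n. 0) \<longlonglongrightarrow> (1::complex)"
      using weak[OF F(1)] F(2)[OF Tmean_in_phi] F(3) by simp
    then show False
      using LIMSEQ_unique[OF tendsto_const] by fastforce
  qed
qed

lemma closure_phi_subset_DS:
  assumes phi_X: "phi \<subseteq> X" and pq: "\<And>n. p n < q n" and q: "filterlim q at_top sequentially"
    and DB: "\<tau> closure_of phi \<subseteq> DB X P p q"
  shows "\<tau> closure_of phi \<subseteq> DS X P p q"
proof
  define Y where "Y = \<tau> closure_of phi"
  have "Y \<subseteq> X"
    unfolding Y_def using closure_of_subset_topspace[of \<tau> phi] topspace_fk_topology by simp
  then have Y: "csubspace Y" "Y \<subseteq> X" "closedin \<tau> Y"
    unfolding Y_def using csubspace_closure[OF csubspace_phi phi_X] by simp_all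
  have phi_Y: "phi \<subseteq> Y"
    unfolding Y_def using closure_of_subset phi_X topspace_fk_topology by metis
  have T_X: "Tmean p q n y \<in> X" for n y
    using Tmean_in_phi phi_X by blast
  have bounded: "bdd_above (range (\<lambda>n. Q k (Tmean p q n y)))" if "y \<in> Y" for k y
  proof (rule weakly_bounded_imp_bounded[OF T_X])
    show "bounded (range (\<lambda>n. f (Tmean p q n y)))" if "f \<in> fk_dual X P" for f
      using DB \<open>y \<in> Y\<close> that unfolding Y_def DB_def by blast
  qed
  have "dominated Y {\<lambda>y. Q k (Tmean p q n y)}" for n k
    using Tmean_dominated[OF phi_X, where p=p and q=q and n=n and k=k, OF pq] Y(2)
    by (rule dominated_subset)
  then have "dominated Y (range (\<lambda>n y. Q k (Tmean p q n y)))" for k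
    by (rule uniform_boundedness[OF Y T_X Tmean_add Tmean_cscale _ bounded])
  then have "limitin \<tau> (\<lambda>n. Tmean p q n y) y sequentially" if "y \<in> Y" for y
    using limitin_by_equicontinuity[OF Y(1,2) phi_Y _ T_X Tmean_diff _
        Tmean_tendsto_on_phi[OF phi_X pq q] that]
    unfolding Y_def by blast
  then show "y \<in> DS X P p q" if "y \<in> \<tau> closure_of phi" for y
    using that Y(2) unfolding DS_def Y_def by blast
qed

end

theorem mainTheorem10:
  fixes X :: "(nat \<Rightarrow> complex) set" and P :: "nat \<Rightarrow> (nat \<Rightarrow> complex) \<Rightarrow> real"
    and p q :: "nat \<Rightarrow> nat"
  assumes "FK_space X P"
    and "\<And>n. p n < q n"
    and "filterlim q at_top sequentially"
    and "phi \<subseteq> X"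
    and "(fk_topology X P) closure_of phi \<subseteq> DB X P p q"
  shows "has_sigma X P p q ((fk_topology X P) closure_of phi)
       \<and> DS X P p q = DW X P p q
       \<and> DW X P p q = (fk_topology X P) closure_of phi"
proof -
  interpret fk_space X P
    by (rule fk_space.intro) fact
  have "\<tau> closure_of phi \<subseteq> DS X P p q"
    by (rule closure_phi_subset_DS[OF assms(4,2,3,5)])
  moreover have "DS X P p q \<subseteq> DW X P p q" "DW X P p q \<subseteq> \<tau> closure_of phi"
    by (rule DS_subset_DW, rule DW_subset_closure_phi[OF assms(4)])
  ultimately show ?thesis
    unfolding has_sigma_def DS_def by blast
qed

end
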